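(* Assume the setting and algorithm described in the context. If $0<\alpha\le\min\Big\{\frac{1-\lambda^2}{16\lambda},\frac{\sqrt n}{\sqrt{8m}}\Big\}\frac1L$, then for all $k\ge0$, $$\mathbb E\big[\|y^{k+2}-Jy^{k+2}\|^2\big]\le\frac{1+\lambda^2}{2}\mathbb E\big[\|y^{k+1}-Jy^{k+1}\|^2\big]+\frac{30.5L^2}{1-\lambda^2}\mathbb E\big[\|x^k-Jx^k\|^2\big]+\frac{97L^2n}{8}\mathbb E[t^k]+\frac{16\lambda^2\alpha^2L^2n}{1-\lambda^2}\mathbb E\big[\|\overline{\nabla\mathbf f}(x^k)\|^2\big].$$
   Context: Setting. Let $n,m,p\ge1$ be integers and $\mathcal V=\{1,\dots,n\}$. For each $i\in\mathcal V$ and $j\in\{1,\dots,m\}$, $f_{i,j}:\mathbb R^p\to\mathbb R$ is differentiable and $L$-smooth for some $L>0$, i.e. $\|\nabla f_{i,j}(x)-\nabla f_{i,j}(y)\|\le L\|x-y\|$ for all $x,y\in\mathbb R^p$. Let $f_i:=\frac1m\sum_{j=1}^m f_{i,j}$ and $F:=\frac1n\sum_{i=1}^n f_i$, and assume $F^*:=\inf_{x\in\mathbb R^p}F(x)>-\infty$. Let $\underline W=(\underline w_{ir})\in\mathbb R^{n\times n}$ be a nonnegative, primitive, doubly stochastic matrix ($\underline W\mathbf 1_n=\mathbf 1_n$, $\mathbf 1_n^\top\underline W=\mathbf 1_n^\top$), and let $\lambda\in[0,1)$ be its second largest singular value. Any expression with $\lambda$ in a denominator is read as $+\infty$ when $\lambda=0$.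 Algorithm GT-SAGA with step-size $\alpha>0$: fix a deterministic $\bar x^0\in\mathbb R^p$; for all $i\in\mathcal V$ set $x_i^0=\bar x^0$, $z_{i,j}^0=x_i^0$ for all $j$, $y_i^0=0$, $g_i^{-1}=0$. For $k=0,1,2,\dots$ and every $i\in\mathcal V$: draw $\tau_i^k$ uniformly from $\{1,\dots,m\}$; set $g_i^k=\nabla f_{i,\tau_i^k}(x_i^k)-\nabla f_{i,\tau_i^k}(z_{i,\tau_i^k}^k)+\frac1m\sum_{j=1}^m\nabla f_{i,j}(z_{i,j}^k)$; set $y_i^{k+1}=\sum_{r=1}^n\underline w_{ir}(y_r^k+g_r^k-g_r^{k-1})$; set $x_i^{k+1}=\sum_{r=1}^n\underline w_{ir}(x_r^k-\alpha y_r^{k+1})$; draw $s_i^k$ uniformly from $\{1,\dots,m\}$; set $z_{i,j}^{k+1}=x_i^k$ if $j=s_i^k$ and $z_{i,j}^{k+1}=z_{i,j}^k$ otherwise. The family $\{\tau_i^k,s_i^k: i\in\mathcal V,k\ge0\}$ is independent. Notation. $x^k,y^k,g^k\in\mathbb R^{np}$ stack the $x_i^k$, $y_i^k$, $g_i^k$; $\nabla\mathbf f(x^k)\in\mathbb R^{np}$ stacks $\nabla f_i(x_i^k)$, $i=1,\dots,n$; $W=\underline W\otimes I_p$, $J=(\frac1n\mathbf 1_n\mathbf 1_n^\top)\otimes I_p$; $\bar x^k=\frac1n\sum_i x_i^k$, $\bar g^k=\frac1n\sum_i g_i^k$, $\overline{\nabla\mathbf f}(x^k)=\frac1n\sum_i\nabla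 f_i(x_i^k)$. $\mathcal F^0$ is the trivial $\sigma$-algebra and $\mathcal F^k=\sigma(\{\tau_i^t,s_i^t:i\in\mathcal V,\ t\le k-1\})$ for $k\ge1$. $t^k:=\frac1n\sum_{i=1}^n\frac1m\sum_{j=1}^m\|\bar x^k-z_{i,j}^k\|^2$. $\|\nabla\mathbf f(x^0)\|^2:=\sum_{i=1}^n\|\nabla f_i(\bar x^0)\|^2$. Norms are Euclidean (spectral for matrices); vector and matrix inequalities are entrywise. *)

theory Defs
  imports "HOL-Analysis.Analysis" "HOL-Probability.Product_PMF" "Jordan_Normal_Form.Char_Poly"
begin

definition nonneg_mat :: "real mat \<Rightarrow> bool" where
  "nonneg_mat A \<longleftrightarrow> (\<forall>i<dim_row A. \<forall>j<dim_col A. A $$ (i,j) \<ge> 0)"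

definition primitive_mat :: "real mat \<Rightarrow> bool" where
  "primitive_mat A \<longleftrightarrow> (\<exists>k>0. \<forall>i<dim_row A. \<forall>j<dim_col A. (A ^\<^sub>m k) $$ (i,j) > 0)"

definition doubly_stochastic :: "nat \<Rightarrow> real mat \<Rightarrow> bool" where
  "doubly_stochastic n A \<longleftrightarrow> A \<in> carrier_mat n n \<and>
     (\<forall>i<n. (\<Sum>r<n. A $$ (i,r)) = 1) \<and> (\<forall>r<n. (\<Sum>i<n. A $$ (i,r)) = 1)"

text \<open>Singular values of A: the nonnegative square roots of the eigenvalues (with multiplicity)
  of A^T A, listed in nonincreasing order. lam is the second largest singular value
  (convention: 0 if there is only one singular value).\<close>
definition singular_values :: "real mat \<Rightarrow> real list \<Rightarrow> bool" where
  "singular_values A ss \<longleftrightarrow> length ss = dim_col A \<and> sorted_wrt (\<ge>) ss \<and> (\<forall>s\<in>set ss. s \<ge> 0) \<and>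
     char_poly (transpose_mat A * A) = (\<Prod>s\<leftarrow>ss. [:-(s^2), 1:])"

definition second_singular_value :: "real mat \<Rightarrow> real \<Rightarrow> bool" where
  "second_singular_value A lam \<longleftrightarrow>
     (\<exists>ss. singular_values A ss \<and> lam = (if length ss \<ge> 2 then ss ! 1 else 0))"

text \<open>GT-SAGA. Nodes are 0..n-1, component functions 0..m-1.
  omega (k,i) = (tau_i^k, s_i^k) in {0..<m} x {0..<m}.
  G i j is the gradient of f_{i,j}. State at step k: (x^k, y^k, g^{k-1}, z^k).\<close>
fun gt_saga :: "nat \<Rightarrow> nat \<Rightarrow> real mat \<Rightarrow> real \<Rightarrow> (nat \<Rightarrow> nat \<Rightarrow> 'a::euclidean_space \<Rightarrow> 'a) \<Rightarrow> 'a
    \<Rightarrow> (nat \<times> nat \<Rightarrow> nat \<times> nat) \<Rightarrow> nat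
    \<Rightarrow> (nat \<Rightarrow> 'a) \<times> (nat \<Rightarrow> 'a) \<times> (nat \<Rightarrow> 'a) \<times> (nat \<Rightarrow> nat \<Rightarrow> 'a)" where
  "gt_saga n m W \<alpha> G x0 \<omega> 0 = ((\<lambda>i. x0), (\<lambda>i. 0), (\<lambda>i. 0), (\<lambda>i j. x0))"
| "gt_saga n m W \<alpha> G x0 \<omega> (Suc k) =
    (case gt_saga n m W \<alpha> G x0 \<omega> k of (x, y, gp, z) \<Rightarrow>
      let g = (\<lambda>i. G i (fst (\<omega> (k,i))) (x i) - G i (fst (\<omega> (k,i))) (z i (fst (\<omega> (k,i))))
                    + (1 / real m) *\<^sub>R (\<Sum>j<m. G i j (z i j)));
          y' = (\<lambda>i. \<Sum>r<n. W $$ (i,r) *\<^sub>R (y r + g r - gp r));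
          x' = (\<lambda>i. \<Sum>r<n. W $$ (i,r) *\<^sub>R (x r - \<alpha> *\<^sub>R y' r));
          z' = (\<lambda>i j. if j = snd (\<omega> (k,i)) then x i else z i j)
      in (x', y', g, z'))"

definition gx where "gx n m W \<alpha> G x0 \<omega> k = fst (gt_saga n m W \<alpha> G x0 \<omega> k)"
definition gy where "gy n m W \<alpha> G x0 \<omega> k = fst (snd (gt_saga n m W \<alpha> G x0 \<omega> k))"
definition gz where "gz n m W \<alpha> G x0 \<omega> k = snd (snd (snd (gt_saga n m W \<alpha> G x0 \<omega> k)))"

definition avg :: "nat \<Rightarrow> (nat \<Rightarrow> 'a::real_vector) \<Rightarrow> 'a" where
  "avg n v = (1 / real n) *\<^sub>R (\<Sum>i<n. v i)"

definition cons_err :: "nat \<Rightarrow> (nat \<Rightarrow> 'a::real_normed_vector) \<Rightarrow> real" where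
  "cons_err n v = (\<Sum>i<n. (norm (v i - avg n v))^2)"

definition draws :: "nat \<Rightarrow> nat \<Rightarrow> nat \<Rightarrow> (nat \<times> nat \<Rightarrow> nat \<times> nat) pmf" where
  "draws n m N = Pi_pmf ({0..<N} \<times> {0..<n}) (0,0) (\<lambda>_. pmf_of_set ({0..<m} \<times> {0..<m}))"

end

theory Submission
  imports Defs "Jordan_Normal_Form.Schur_Decomposition"
begin

text \<open>The tracker satisfies y^(k+2) = W v with v = y^(k+1) + g^(k+1) - g^k, and on vectors with
  zero average the mixing matrix contracts squared norms by \<lambda>^2: a maximiser of the Rayleigh
  quotient of W^T W on the zero-average subspace is an eigenvector, and its eigenvalue cannot be the
  simple eigenvalue 1 of the all-ones vector, so it is at most \<lambda>^2. Writing g^k = \<nabla>f(x^k) + e^k,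
  the change of the true gradients is bounded by L \<parallel>x^(k+1) - x^k\<parallel>; the SAGA errors e^k have mean
  zero given the past, so all their cross terms with quantities fixed by earlier draws vanish in
  expectation, and their second moments are at most L^2 times the mean squared distance between the
  iterates and the stored SAGA points. Young's inequality with weight (1 - \<lambda>^2)/(3\<lambda>^2) and the
  step-size restriction \<alpha>^2 L^2 \<lambda>^2 \<le> (1 - \<lambda>^2)^2/256 give the constants.\<close>

section \<open>Stacked vectors and the mixing step\<close>

text \<open>A stacked vector (v_0, ..., v_(n-1)) is a function on nat of which only the values below n
  matter; mix n W v is (W \<otimes> I) v and centered n v is (I - J) v.\<close>

definition mix :: "nat \<Rightarrow> real mat \<Rightarrow> (nat \<Rightarrow> 'b::real_vector) \<Rightarrow> nat \<Rightarrow> 'b" where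
  "mix n W v i = (\<Sum>r<n. W $$ (i,r) *\<^sub>R v r)"

definition sqnorm :: "nat \<Rightarrow> (nat \<Rightarrow> 'a::real_inner) \<Rightarrow> real" where
  "sqnorm n v = (\<Sum>i<n. (norm (v i))^2)"

definition sinner :: "nat \<Rightarrow> (nat \<Rightarrow> 'a::real_inner) \<Rightarrow> (nat \<Rightarrow> 'a) \<Rightarrow> real" where
  "sinner n u v = (\<Sum>i<n. u i \<bullet> v i)"

definition centered :: "nat \<Rightarrow> (nat \<Rightarrow> 'a::real_vector) \<Rightarrow> nat \<Rightarrow> 'a" where
  "centered n v = (\<lambda>i. v i - avg n v)"

lemma mix_real: "mix n W (v :: nat \<Rightarrow> real) i = (\<Sum>r<n. W $$ (i,r) * v r)"
  by (simp add: mix_def)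

lemma mix_add: "mix n W (\<lambda>r. u r + v r) i = mix n W u i + mix n W v i"
  by (simp add: mix_def scaleR_add_right sum.distrib)

lemma mix_diff: "mix n W (\<lambda>r. u r - v r) i = mix n W u i - mix n W v i"
  by (simp add: mix_def scaleR_diff_right sum_subtractf)

lemma mix_scaleR: "mix n W (\<lambda>r. c *\<^sub>R u r) i = c *\<^sub>R mix n W u i"
  by (simp add: mix_def scaleR_sum_right mult.commute)

lemma doubly_stochastic_carrier: "doubly_stochastic n W \<Longrightarrow> W \<in> carrier_mat n n"
  and doubly_stochastic_row_sum: "doubly_stochastic n W \<Longrightarrow> i < n \<Longrightarrow> (\<Sum>r<n. W $$ (i,r)) = 1"
  and doubly_stochastic_col_sum: "doubly_stochastic n W \<Longrightarrow> r < n \<Longrightarrow> (\<Sum>i<n. W $$ (i,r)) = 1"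
  unfolding doubly_stochastic_def by auto

lemma sum_mix:
  assumes "doubly_stochastic n W"
  shows "(\<Sum>i<n. mix n W v i) = (\<Sum>r<n. v r)"
proof -
  have "(\<Sum>i<n. mix n W v i) = (\<Sum>r<n. (\<Sum>i<n. W $$ (i,r)) *\<^sub>R v r)"
    unfolding mix_def scaleR_sum_left by (rule sum.swap)
  also have "\<dots> = (\<Sum>r<n. v r)" using doubly_stochastic_col_sum[OF assms] by simp
  finally show ?thesis .
qed

lemma mix_const:
  assumes "doubly_stochastic n W" "i < n"
  shows "mix n W (\<lambda>_. c) i = c"
  using doubly_stochastic_row_sum[OF assms] by (simp add: mix_def scaleR_sum_left[symmetric])

lemma avg_mix: "doubly_stochastic n W \<Longrightarrow> avg n (mix n W v) = avg n v"
  by (simp add: avg_def sum_mix)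

lemma avg_add_diff: "avg n (\<lambda>r. a r + b r - c r) = avg n a + avg n b - avg n c"
  by (simp add: avg_def sum.distrib sum_subtractf scaleR_diff_right scaleR_add_right)

lemma sum_eq_card_scaleR_avg: "n > 0 \<Longrightarrow> (\<Sum>i<n. v i) = real n *\<^sub>R avg n v"
  by (simp add: avg_def)

lemma centered_add: "centered n (\<lambda>i. a i + b i) i = centered n a i + centered n b i"
  by (simp add: centered_def avg_def sum.distrib scaleR_add_right)

lemma centered_diff: "centered n (\<lambda>i. a i - b i) i = centered n a i - centered n b i"
  by (simp add: centered_def avg_def sum_subtractf scaleR_diff_right)

lemma sum_centered: "n > 0 \<Longrightarrow> (\<Sum>i<n. centered n v i) = 0"
  by (simp add: centered_def sum_subtractf sum_eq_card_scaleR_avg[of n v] sum_constant_scaleR)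

lemma centered_mix:
  assumes "doubly_stochastic n W" and "i < n"
  shows "centered n (mix n W v) i = mix n W (centered n v) i"
  by (simp add: centered_def mix_diff mix_const[OF assms] avg_mix[OF assms(1)])

lemma cons_err_eq_sqnorm_centered: "cons_err n v = sqnorm n (centered n v)"
  by (simp add: cons_err_def sqnorm_def centered_def)

lemma sqnorm_nonneg: "sqnorm n v \<ge> 0"
  by (simp add: sqnorm_def sum_nonneg)

lemma sqnorm_cong: "(\<And>i. i < n \<Longrightarrow> u i = v i) \<Longrightarrow> sqnorm n u = sqnorm n v"
  by (simp add: sqnorm_def)

lemma sqnorm_scaleR: "sqnorm n (\<lambda>i. c *\<^sub>R v i) = c^2 * sqnorm n v"
  by (simp add: sqnorm_def power_mult_distrib sum_distrib_left)

lemma sqnorm_add: "sqnorm n (\<lambda>i. u i + v i) = sqnorm n u + 2 * sinner n u v + sqnorm n v"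
  unfolding sqnorm_def sinner_def
  by (simp add: power2_norm_eq_inner inner_add_left inner_add_right inner_commute sum.distrib sum_distrib_left)

lemma sqnorm_diff: "sqnorm n (\<lambda>i. u i - v i) = sqnorm n u - 2 * sinner n u v + sqnorm n v"
  unfolding sqnorm_def sinner_def
  by (simp add: power2_norm_eq_inner inner_diff_left inner_diff_right inner_commute sum.distrib
      sum_subtractf sum_distrib_left)

lemma sinner_diff_right: "sinner n u (\<lambda>i. v i - w i) = sinner n u v - sinner n u w"
  by (simp add: sinner_def inner_diff_right sum_subtractf)

lemma young_inner:
  fixes u v :: "'a::real_inner"
  assumes "\<eta> > 0"
  shows "2 * (u \<bullet> v) \<le> \<eta> * (norm u)^2 + (1/\<eta>) * (norm v)^2"
proof -
  have "\<eta> * (\<eta> * (norm u)^2 + (1/\<eta>) * (norm v)^2 - 2 * norm u * norm v) = (\<eta> * norm u - norm v)^2"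
    using assms by (simp add: field_simps power2_eq_square)
  then have "2 * norm u * norm v \<le> \<eta> * (norm u)^2 + (1/\<eta>) * (norm v)^2"
    using assms by (smt (verit) mult_pos_neg zero_le_power2)
  moreover have "u \<bullet> v \<le> norm u * norm v" by (rule norm_cauchy_schwarz)
  ultimately show ?thesis by linarith
qed

lemma sinner_young:
  assumes "\<eta> > 0"
  shows "2 * sinner n u v \<le> \<eta> * sqnorm n u + (1/\<eta>) * sqnorm n v"
proof -
  have "2 * sinner n u v = (\<Sum>i<n. 2 * (u i \<bullet> v i))" by (simp add: sinner_def sum_distrib_left)
  also have "\<dots> \<le> (\<Sum>i<n. \<eta> * (norm (u i))^2 + (1/\<eta>) * (norm (v i))^2)"
    by (intro sum_mono young_inner assms)
  also have "\<dots> = \<eta> * sqnorm n u + (1/\<eta>) * sqnorm n v" by (simp add: sqnorm_def sum.distrib sum_distrib_left)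
  finally show ?thesis .
qed

lemma sqnorm_add_le:
  assumes "\<eta> > 0"
  shows "sqnorm n (\<lambda>i. u i + v i) \<le> (1 + \<eta>) * sqnorm n u + (1 + 1/\<eta>) * sqnorm n v"
  using sqnorm_add[of n u v] sinner_young[OF assms, of n u v] by (simp add: algebra_simps)

lemma sqnorm_diff_le: "sqnorm n (\<lambda>i. u i - v i) \<le> 2 * sqnorm n u + 2 * sqnorm n v"
  using sqnorm_diff[of n u v] sinner_young[of 1 n u "\<lambda>i. - v i"]
  by (simp add: sinner_def sqnorm_def inner_minus_right sum_negf algebra_simps)

lemma norm_diff_sq_le: "(norm (a - c))^2 \<le> 2 * (norm (a - b))^2 + 2 * (norm (b - c))^2"
  for a b c :: "'a::real_inner"
  using sqnorm_diff_le[of 1 "\<lambda>_. a - b" "\<lambda>_. c - b"] by (simp add: sqnorm_def norm_minus_commute)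

lemma sqnorm_decomp:
  assumes "n > 0"
  shows "sqnorm n v = sqnorm n (centered n v) + real n * (norm (avg n v))^2"
proof -
  have "sqnorm n (centered n v) = sqnorm n v - 2 * sinner n v (\<lambda>_. avg n v) + sqnorm n (\<lambda>_. avg n v)"
    unfolding centered_def by (rule sqnorm_diff)
  moreover have "sinner n v (\<lambda>_. avg n v) = real n * (norm (avg n v))^2"
    using assms by (simp add: sinner_def inner_sum_left[symmetric] sum_eq_card_scaleR_avg power2_norm_eq_inner)
  ultimately show ?thesis by (simp add: sqnorm_def)
qed

lemma sqnorm_centered_le: "n > 0 \<Longrightarrow> sqnorm n (centered n v) \<le> sqnorm n v"
  using sqnorm_decomp[of n v] by simp

lemma sinner_centered_right: "sinner n u (centered n v) = sinner n u v - (\<Sum>i<n. u i) \<bullet> avg n v"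
  by (simp add: sinner_def centered_def inner_diff_right sum_subtractf inner_sum_left)

lemma sinner_centered: "(\<Sum>i<n. u i) = 0 \<Longrightarrow> sinner n u (centered n v) = sinner n u v"
  by (simp add: sinner_centered_right)

lemma sinner_centered_swap: "n > 0 \<Longrightarrow> sinner n u (centered n v) = sinner n (centered n u) v"
  using sinner_centered_right[of n u v] sinner_centered_right[of n v u]
  by (simp add: sinner_def inner_commute sum_eq_card_scaleR_avg)
section \<open>Contraction of the mixing matrix on zero-average vectors\<close>

lemma upper_triangular_fixed_vec_tail_zero:
  fixes B :: "real mat" and x :: "real vec"
  assumes B: "B \<in> carrier_mat n n" and ut: "upper_triangular B"
    and x: "x \<in> carrier_vec n" and fixed: "B *\<^sub>v x = x"
    and diag: "\<And>i. 1 \<le> i \<Longrightarrow> i < n \<Longrightarrow> B $$ (i,i) \<noteq> 1"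
    and i: "1 \<le> i" "i < n"
  shows "x $ i = 0"
proof -
  have "\<forall>i. 1 \<le> i \<longrightarrow> i < n \<longrightarrow> n - i \<le> d \<longrightarrow> x $ i = 0" for d
  proof (induction d)
    case 0 then show ?case by auto
  next
    case (Suc d)
    show ?case
    proof (intro allI impI)
      fix i assume i1: "1 \<le> i" and i2: "i < n" and d: "n - i \<le> Suc d"
      have above: "x $ j = 0" if "i < j" "j < n" for j
        using Suc.IH that i1 d by auto
      have below: "B $$ (i,j) = 0" if "j < i" for j
        using ut that i2 B unfolding upper_triangular_def by auto
      have "(B *\<^sub>v x) $ i = (\<Sum>j = 0..<n. B $$ (i,j) * x $ j)"
        using B x i2 by (auto simp: scalar_prod_def)
      also have "\<dots> = (\<Sum>j \<in> {0..<n}. if j = i then B $$ (i,i) * x $ i else 0)"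
      proof (rule sum.cong[OF refl])
        fix j assume "j \<in> {0..<n}"
        then show "B $$ (i,j) * x $ j = (if j = i then B $$ (i,i) * x $ i else 0)"
          using above[of j] below[of j] by (cases j i rule: linorder_cases) auto
      qed
      also have "\<dots> = B $$ (i,i) * x $ i" using i2 by simp
      finally have "(B $$ (i,i) - 1) * x $ i = 0" using fixed by (simp add: algebra_simps)
      then show "x $ i = 0" using diag[OF i1 i2] by simp
    qed
  qed
  then show ?thesis using i by auto
qed

text \<open>Via a Schur decomposition A = P B Q: fixed vectors of A correspond to fixed vectors of the
  triangular B, which vanish below the first coordinate.\<close>
lemma fixed_vecs_collinear_if_one_simple:
  fixes A :: "real mat"
  assumes A: "A \<in> carrier_mat n n"
    and cp: "char_poly A = (\<Prod>e\<leftarrow>es. [:- e, 1:])"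
    and esi: "\<And>i. 1 \<le> i \<Longrightarrow> i < n \<Longrightarrow> es ! i \<noteq> 1"
    and u: "u \<in> carrier_vec n" "u \<noteq> 0\<^sub>v n" "A *\<^sub>v u = u"
    and w: "w \<in> carrier_vec n" "A *\<^sub>v w = w"
  shows "\<exists>c. w = c \<cdot>\<^sub>v u"
proof -
  obtain B P Q where sd: "schur_decomposition A es = (B,P,Q)" by (cases "schur_decomposition A es") auto
  from schur_decomposition[OF A cp sd]
  have sim: "similar_mat_wit A B P Q" and ut: "upper_triangular B" and dg: "diag_mat B = es" by auto
  from sim A have BPQ: "B \<in> carrier_mat n n" "P \<in> carrier_mat n n" "Q \<in> carrier_mat n n"
    and PQ: "P * Q = 1\<^sub>m n" and QP: "Q * P = 1\<^sub>m n" and AA: "A = P * B * Q"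
    unfolding similar_mat_wit_def Let_def by auto
  have Bdiag: "B $$ (i,i) = es ! i" if "i < n" for i
    using that BPQ dg by (auto simp: diag_mat_def)
  have QPv: "Q *\<^sub>v (P *\<^sub>v v) = v" if "v \<in> carrier_vec n" for v
    using assoc_mult_mat_vec[of Q n n P n v] BPQ that QP by auto
  have PQv: "P *\<^sub>v (Q *\<^sub>v v) = v" if "v \<in> carrier_vec n" for v
    using assoc_mult_mat_vec[of P n n Q n v] BPQ that PQ by auto
  have B_fixed: "B *\<^sub>v (Q *\<^sub>v v) = Q *\<^sub>v v" if v: "v \<in> carrier_vec n" "A *\<^sub>v v = v" for v
  proof -
    have "A *\<^sub>v v = P *\<^sub>v (B *\<^sub>v (Q *\<^sub>v v))"
      unfolding AA using assoc_mult_mat_vec[of "P*B" n n Q n v] assoc_mult_mat_vec[of P n n B n "Q *\<^sub>v v"] BPQ v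
      by auto
    then have "Q *\<^sub>v v = Q *\<^sub>v (P *\<^sub>v (B *\<^sub>v (Q *\<^sub>v v)))" using v by simp
    then show ?thesis using QPv BPQ v by simp
  qed
  have tail: "(Q *\<^sub>v v) $ i = 0" if v: "v \<in> carrier_vec n" "A *\<^sub>v v = v" and i: "1 \<le> i" "i < n" for v i
    using upper_triangular_fixed_vec_tail_zero[OF BPQ(1) ut _ B_fixed[OF v]] BPQ v i Bdiag esi by auto
  let ?x = "Q *\<^sub>v u" and ?y = "Q *\<^sub>v w"
  have xc: "?x \<in> carrier_vec n" "?y \<in> carrier_vec n" using BPQ u w by auto
  have x0: "?x $ 0 \<noteq> 0"
  proof
    assume h: "?x $ 0 = 0"
    have "?x = 0\<^sub>v n"
    proof (rule eq_vecI)
      fix i assume "i < dim_vec (0\<^sub>v n)"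
      then show "?x $ i = 0\<^sub>v n $ i" using tail[OF u(1) u(3), of i] h by (cases "i = 0") auto
    qed (use xc BPQ in auto)
    then have "u = P *\<^sub>v 0\<^sub>v n" using PQv[OF u(1)] by simp
    also have "\<dots> = 0\<^sub>v n" using BPQ by (intro eq_vecI) (auto simp: scalar_prod_right_zero)
    finally show False using u by simp
  qed
  define c where "c = ?y $ 0 / ?x $ 0"
  have "?y = c \<cdot>\<^sub>v ?x"
  proof (intro eq_vecI)
    fix i assume "i < dim_vec (c \<cdot>\<^sub>v ?x)"
    then have i: "i < n" using xc BPQ by simp
    then show "?y $ i = (c \<cdot>\<^sub>v ?x) $ i"
      using x0 tail[OF u(1) u(3), of i] tail[OF w, of i] xc BPQ by (cases "i = 0") (auto simp: c_def)
  qed (use xc in auto)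
  then have "w = P *\<^sub>v (c \<cdot>\<^sub>v ?x)" using PQv[OF w(1)] by simp
  also have "\<dots> = c \<cdot>\<^sub>v u" using PQv[OF u(1)] BPQ xc by (simp add: mult_mat_vec)
  finally show ?thesis by blast
qed

lemma quadratic_nonpos_imp_linear_coeff_zero:
  fixes c1 c2 :: real
  assumes "\<And>t. 2 * t * c1 + t^2 * c2 \<le> 0" and "c1 \<ge> 0"
  shows "c1 = 0"
proof -
  define d where "d = \<bar>c2\<bar> + 1"
  have d: "d > 0" by (auto simp: d_def)
  have "2 * (c1/d) * c1 + (c1/d)^2 * c2 \<le> 0" using assms(1) .
  then have "(2 * (c1/d) * c1 + (c1/d)^2 * c2) * d^2 \<le> 0"
    by (simp add: mult_nonpos_nonneg)
  moreover have "(2 * (c1/d) * c1 + (c1/d)^2 * c2) * d^2 = c1^2 * (2 * d + c2)"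
    using d by (simp add: field_simps power2_eq_square)
  ultimately have "c1^2 * (2 * d + c2) \<le> 0" by simp
  moreover have "2 * d + c2 > 0" by (auto simp: d_def abs_if)
  ultimately have "c1^2 \<le> 0" by (simp add: mult_le_0_iff)
  then show ?thesis by simp
qed

lemma gram_mult_vec:
  fixes W :: "real mat"
  assumes W: "W \<in> carrier_mat n n" and r: "r < n"
  shows "((transpose_mat W * W) *\<^sub>v vec n v) $ r = (\<Sum>i<n. W $$ (i,r) * mix n W v i)"
  using W r by (simp add: scalar_prod_def atLeast0LessThan mix_real)

lemma sum_sq_eq_0_imp_zero:
  fixes x :: "nat \<Rightarrow> real"
  assumes "(\<Sum>i<n. (x i)^2) = 0" and "i < n"
  shows "x i = 0"
  using assms by (simp add: sum_nonneg_eq_0_iff)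

lemma normalize_sum_sq:
  fixes x :: "nat \<Rightarrow> real" and W :: "real mat"
  assumes pos: "(\<Sum>i<n. (x i)^2) > 0"
  defines "y \<equiv> \<lambda>i. if i < n then x i / sqrt (\<Sum>i<n. (x i)^2) else 0"
  shows "(\<Sum>i<n. (y i)^2) = 1" and "(\<Sum>i<n. y i) = (\<Sum>i<n. x i) / sqrt (\<Sum>i<n. (x i)^2)"
    and "\<And>i. i < n \<Longrightarrow> \<bar>y i\<bar> \<le> 1"
    and "(\<Sum>i<n. (mix n W y i)^2) = (\<Sum>i<n. (mix n W x i)^2) / (\<Sum>i<n. (x i)^2)"
proof -
  define N where "N = (\<Sum>i<n. (x i)^2)"
  note pos = pos[folded N_def]
  show "(\<Sum>i<n. (y i)^2) = 1"
    using pos by (simp add: y_def N_def[symmetric] power_divide sum_divide_distrib[symmetric])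
  show "(\<Sum>i<n. y i) = (\<Sum>i<n. x i) / sqrt (\<Sum>i<n. (x i)^2)"
    by (simp add: y_def sum_divide_distrib)
  show "\<bar>y i\<bar> \<le> 1" if i: "i < n" for i
  proof -
    have "(x i)^2 \<le> N" unfolding N_def using i by (intro member_le_sum) auto
    then have "\<bar>x i\<bar>^2 \<le> N" by simp
    then have "\<bar>x i\<bar> \<le> sqrt N" by (rule real_le_rsqrt)
    then show ?thesis using pos i by (simp add: y_def N_def[symmetric] abs_div divide_le_eq_1)
  qed
  have "mix n W y i = mix n W x i / sqrt N" for i
    unfolding mix_real y_def N_def[symmetric] by (simp add: sum_divide_distrib)
  then show "(\<Sum>i<n. (mix n W y i)^2) = (\<Sum>i<n. (mix n W x i)^2) / (\<Sum>i<n. (x i)^2)"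
    using pos by (simp add: N_def[symmetric] power_divide sum_divide_distrib)
qed

text \<open>Compactness of the unit sphere of the zero-average subspace, with vectors modelled as functions
  nat \<Rightarrow> real that vanish from n on.\<close>
lemma rayleigh_maximizer_exists:
  fixes W :: "real mat" and v :: "nat \<Rightarrow> real"
  assumes v0: "(\<Sum>i<n. v i) = 0" and vnz: "(\<Sum>i<n. (v i)^2) \<noteq> 0"
  obtains vs :: "nat \<Rightarrow> real" where "(\<Sum>i<n. vs i) = 0" "(\<Sum>i<n. (vs i)^2) = 1"
    "\<And>x. (\<Sum>i<n. x i) = 0 \<Longrightarrow> (\<Sum>i<n. (mix n W x i)^2) \<le> (\<Sum>i<n. (mix n W vs i)^2) * (\<Sum>i<n. (x i)^2)"
proof -
  define R where "R = (\<lambda>x::nat\<Rightarrow>real. \<Sum>i<n. (mix n W x i)^2)"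
  define N where "N = (\<lambda>x::nat\<Rightarrow>real. \<Sum>i<n. (x i)^2)"
  define K0 where "K0 = PiE UNIV (\<lambda>i. if i < n then {-1..1} else {0::real})"
  define K where "K = K0 \<inter> {x. (\<Sum>i<n. x i) = 0} \<inter> {x. N x = 1}"
  have coord: "continuous_on UNIV (\<lambda>x::nat\<Rightarrow>real. x i)" for i by simp
  have "compactin (product_topology (\<lambda>i. euclidean) UNIV) K0"
    unfolding K0_def by (subst compactin_PiE) (auto simp: compactin_euclidean_iff)
  then have "compact K0" by (simp add: euclidean_product_topology compactin_euclidean_iff)
  moreover have "closed {x::nat\<Rightarrow>real. (\<Sum>i<n. x i) = 0}" "closed {x::nat\<Rightarrow>real. N x = 1}"
    unfolding N_def by (intro closed_Collect_eq continuous_intros coord)+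
  ultimately have compact: "compact K" unfolding K_def by (intro compact_Int_closed)
  have "continuous_on UNIV R"
    unfolding R_def mix_real by (intro continuous_intros coord)
  then have cont: "continuous_on K R" by (rule continuous_on_subset) simp
  have N_nonneg: "N x \<ge> 0" for x unfolding N_def by (simp add: sum_nonneg)
  have normalized: "y \<in> K \<and> R y = R x / N x"
    if x: "(\<Sum>i<n. x i) = 0" "N x \<noteq> 0" and y: "y = (\<lambda>i. if i < n then x i / sqrt (N x) else 0)" for x y
  proof -
    have pos: "N x > 0" using x(2) N_nonneg[of x] by linarith
    have "N y = 1" "(\<Sum>i<n. y i) = 0" "\<forall>i<n. \<bar>y i\<bar> \<le> 1" "R y = R x / N x"
      using normalize_sum_sq[OF pos[unfolded N_def]] x(1) unfolding y N_def R_def by simp_all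
    moreover have "y i \<in> (if i < n then {-1..1} else {0})" for i
    proof (cases "i < n")
      case True
      then have "\<bar>y i\<bar> \<le> 1" using calculation(3) by blast
      then show ?thesis using True by (simp add: abs_le_iff)
    qed (simp add: y)
    then have "y \<in> K0" unfolding K0_def PiE_UNIV_domain by (auto simp: Pi_iff)
    ultimately show ?thesis by (simp add: K_def)
  qed
  have "K \<noteq> {}" using normalized[OF v0 _ refl] vnz unfolding N_def by blast
  then obtain vs where vs: "vs \<in> K" and vsmax: "\<And>y. y \<in> K \<Longrightarrow> R y \<le> R vs"
    using continuous_attains_sup[OF compact _ cont] by blast
  have bound: "R x \<le> R vs * N x" if x: "(\<Sum>i<n. x i) = 0" for x
  proof (cases "N x = 0")
    case True
    then have "\<forall>i<n. x i = 0" using sum_sq_eq_0_imp_zero[where x=x] unfolding N_def by blast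
    then show ?thesis by (simp add: R_def N_def mix_real)
  next
    case False
    have "N x > 0" using False N_nonneg[of x] by linarith
    moreover have "R x / N x \<le> R vs"
      using vsmax[OF conjunct1[OF normalized[OF x False refl]]] normalized[OF x False refl] by simp
    ultimately show ?thesis by (simp add: divide_le_eq mult.commute)
  qed
  from vs have "(\<Sum>i<n. vs i) = 0" "N vs = 1" by (auto simp: K_def)
  with bound show ?thesis by (intro that[of vs]) (auto simp: R_def N_def)
qed

text \<open>First-order optimality: moving the maximiser along u = W^T W vs - \<rho> vs, a zero-average
  direction, gives a quadratic in the step length that is nonpositive, so its linear coefficient
  \<parallel>u\<parallel>^2 vanishes.\<close>
lemma rayleigh_maximizer_eigenvector:
  fixes W :: "real mat" and vs :: "nat \<Rightarrow> real"
  assumes DS: "doubly_stochastic n W" and vs0: "(\<Sum>i<n. vs i) = 0" and vsN: "(\<Sum>i<n. (vs i)^2) = 1"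
    and max: "\<And>x. (\<Sum>i<n. x i) = 0 \<Longrightarrow>
      (\<Sum>i<n. (mix n W x i)^2) \<le> (\<Sum>i<n. (mix n W vs i)^2) * (\<Sum>i<n. (x i)^2)"
    and r: "r < n"
  shows "(\<Sum>i<n. W $$ (i,r) * mix n W vs i) = (\<Sum>i<n. (mix n W vs i)^2) * vs r"
proof -
  define R where "R = (\<lambda>x::nat\<Rightarrow>real. \<Sum>i<n. (mix n W x i)^2)"
  define N where "N = (\<lambda>x::nat\<Rightarrow>real. \<Sum>i<n. (x i)^2)"
  define \<rho> where "\<rho> = R vs"
  define u where "u = (\<lambda>r. (\<Sum>i<n. W $$ (i,r) * mix n W vs i) - \<rho> * vs r)"
  have u0: "(\<Sum>r<n. u r) = 0"
  proof -
    have "(\<Sum>r<n. \<Sum>i<n. W $$ (i,r) * mix n W vs i) = (\<Sum>i<n. (\<Sum>r<n. W $$ (i,r)) * mix n W vs i)"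
      by (subst sum.swap) (simp add: sum_distrib_right)
    also have "\<dots> = 0" using doubly_stochastic_row_sum[OF DS] sum_mix[OF DS, of vs] vs0 by simp
    finally show ?thesis unfolding u_def using vs0 by (simp add: sum_subtractf sum_distrib_left[symmetric])
  qed
  define B where "B = (\<Sum>i<n. mix n W vs i * mix n W u i)"
  define I where "I = (\<Sum>r<n. vs r * u r)"
  have quad: "2 * t * (B - \<rho> * I) + t^2 * (R u - \<rho> * N u) \<le> 0" for t
  proof -
    define xt where "xt = (\<lambda>r. vs r + t * u r)"
    have Nvs: "N vs = 1" using vsN unfolding N_def .
    have mix_xt: "mix n W xt i = mix n W vs i + t * mix n W u i" for i
      unfolding mix_real xt_def by (simp add: distrib_left sum.distrib sum_distrib_left mult.left_commute)
    have Rxt: "R xt = R vs + 2 * t * B + t^2 * R u"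
      unfolding R_def mix_xt B_def
      by (simp add: power2_sum sum.distrib sum_distrib_left power_mult_distrib mult.assoc mult.left_commute)
    have Nxt: "N xt = N vs + 2 * t * I + t^2 * N u"
      unfolding N_def xt_def I_def
      by (simp add: power2_sum sum.distrib sum_distrib_left power_mult_distrib mult.assoc mult.left_commute)
    have "(\<Sum>i<n. xt i) = 0" unfolding xt_def using vs0 u0 by (simp add: sum.distrib sum_distrib_left[symmetric])
    then have "R xt \<le> \<rho> * N xt" using max unfolding R_def N_def \<rho>_def by blast
    then show ?thesis unfolding Rxt Nxt Nvs \<rho>_def[symmetric] by (simp add: algebra_simps)
  qed
  have "B = (\<Sum>i<n. \<Sum>r<n. mix n W vs i * (W $$ (i,r) * u r))"
    unfolding B_def mix_real by (simp add: sum_distrib_left)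
  also have "\<dots> = (\<Sum>r<n. \<Sum>i<n. mix n W vs i * (W $$ (i,r) * u r))" by (rule sum.swap)
  also have "\<dots> = (\<Sum>r<n. u r * (\<Sum>i<n. W $$ (i,r) * mix n W vs i))"
    by (simp add: sum_distrib_left mult.commute mult.left_commute)
  finally have "B - \<rho> * I = (\<Sum>r<n. u r * (\<Sum>i<n. W $$ (i,r) * mix n W vs i)) - (\<Sum>r<n. u r * (\<rho> * vs r))"
    unfolding I_def by (simp add: sum_distrib_left mult.commute mult.left_commute)
  also have "\<dots> = (\<Sum>r<n. (u r)^2)"
    unfolding sum_subtractf[symmetric] by (simp add: u_def right_diff_distrib power2_eq_square)
  finally have "B - \<rho> * I = (\<Sum>r<n. (u r)^2)" .
  then have "(\<Sum>r<n. (u r)^2) = 0"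
    using quadratic_nonpos_imp_linear_coeff_zero[of "\<Sum>r<n. (u r)^2" "R u - \<rho> * N u"] quad
    by (simp add: sum_nonneg)
  then have "u r = 0" using sum_sq_eq_0_imp_zero r by blast
  then show ?thesis unfolding u_def \<rho>_def R_def by simp
qed

lemma second_singular_value_nonneg:
  "second_singular_value W lam \<Longrightarrow> lam \<ge> 0"
  unfolding second_singular_value_def singular_values_def by (auto simp: nth_mem)

text \<open>W^T W has the eigenvalues s_j^2 for the singular values s_0 \<ge> s_1 = \<lambda> \<ge> ... . Since \<lambda> < 1,
  the eigenvalue 1 of the all-ones vector is s_0^2 and simple, so an eigenvector with zero average
  has an eigenvalue s_j^2 with j \<ge> 1.\<close>
lemma gram_eigenvalue_le_second_singular_value:
  fixes W :: "real mat" and vs :: "nat \<Rightarrow> real"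
  assumes DS: "doubly_stochastic n W" and lamd: "second_singular_value W lam" and lam1: "lam < 1"
    and eig: "\<And>r. r < n \<Longrightarrow> (\<Sum>i<n. W $$ (i,r) * mix n W vs i) = \<rho> * vs r"
    and vs0: "(\<Sum>i<n. vs i) = 0" and r0: "r0 < n" "vs r0 \<noteq> 0"
  shows "\<rho> \<le> lam^2"
proof -
  have Wc: "W \<in> carrier_mat n n" using doubly_stochastic_carrier[OF DS] .
  obtain ss where sv: "singular_values W ss" and lamss: "lam = (if 2 \<le> length ss then ss ! 1 else 0)"
    using lamd unfolding second_singular_value_def by blast
  have lss: "length ss = n" and srt: "sorted_wrt (\<ge>) ss" and sge: "\<forall>s\<in>set ss. 0 \<le> s"
    and cp: "char_poly (transpose_mat W * W) = (\<Prod>s\<leftarrow>ss. [:- (s^2), 1:])"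
    using sv Wc unfolding singular_values_def by auto
  have lam2: "lam^2 < 1"
    using second_singular_value_nonneg[OF lamd] lam1 by (simp add: power_less_one_iff abs_square_less_1)
  have n2: "n \<ge> 2"
  proof (rule ccontr)
    assume "\<not> n \<ge> 2"
    then have "n = 1" using r0 by auto
    then show False using vs0 r0 by simp
  qed
  define A where "A = transpose_mat W * W"
  have Ac: "A \<in> carrier_mat n n" unfolding A_def using Wc by auto
  have roots: "\<exists>j<n. x = (ss ! j)^2" if "eigenvalue A x" for x
  proof -
    have "poly (char_poly A) x = 0" using that eigenvalue_root_char_poly[OF Ac] by simp
    then have "(\<Prod>s\<leftarrow>ss. poly [:- (s^2), 1:] x) = 0" using cp unfolding A_def by (simp add: poly_prod_list o_def)
    then obtain s where "s \<in> set ss" "x - s^2 = 0" by (auto simp: prod_list_zero_iff)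
    then show ?thesis using lss by (auto simp: in_set_conv_nth)
  qed
  have vs_vec: "vec n vs \<noteq> 0\<^sub>v n"
  proof
    assume "vec n vs = 0\<^sub>v n"
    then have "vec n vs $ r0 = 0" using r0 by simp
    then show False using r0 by simp
  qed
  have evs: "A *\<^sub>v vec n vs = \<rho> \<cdot>\<^sub>v vec n vs"
    by (rule eq_vecI) (use Ac in \<open>auto simp: A_def gram_mult_vec[OF Wc] eig\<close>)
  then have "eigenvalue A \<rho>" unfolding eigenvalue_def eigenvector_def using vs_vec Ac
    by (auto intro!: exI[of _ "vec n vs"])
  then obtain j where j: "j < n" "\<rho> = (ss ! j)^2" using roots by blast
  define one where "one = vec n (\<lambda>_. 1::real)"
  have A_one: "A *\<^sub>v one = one"
    by (rule eq_vecI) (use Ac in \<open>auto simp: A_def one_def gram_mult_vec[OF Wc] mix_const[OF DS]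
      doubly_stochastic_col_sum[OF DS] sum_distrib_right[symmetric]\<close>)
  have one_nz: "one \<noteq> 0\<^sub>v n"
  proof
    assume "one = 0\<^sub>v n"
    then have "one $ 0 = 0" using n2 by simp
    then show False using n2 by (simp add: one_def)
  qed
  have "eigenvalue A 1" unfolding eigenvalue_def eigenvector_def using A_one one_nz Ac
    by (auto intro!: exI[of _ one] simp: one_def)
  then obtain j1 where j1: "j1 < n" "1 = (ss ! j1)^2" using roots by blast
  have tail_le: "(ss ! i)^2 \<le> lam^2" if "1 \<le> i" "i < n" for i
  proof -
    have "ss ! i \<le> ss ! 1"
      using sorted_wrt_nth_less[OF srt, of 1 i] that lss by (cases "i = 1") auto
    then show ?thesis using lamss lss n2 sge that by (intro power_mono) (auto simp: nth_mem)
  qed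
  show ?thesis
  proof (cases "j = 0")
    case False then show ?thesis using tail_le[of j] j by simp
  next
    case True
    have "j1 = 0" using tail_le[of j1] j1 lam2 by (cases "j1 = 0") auto
    then have "\<rho> = 1" using j1 j True by simp
    have simple: "map (\<lambda>s. s^2) ss ! i \<noteq> 1" if "1 \<le> i" "i < n" for i
      using tail_le[OF that] lam2 lss that by auto
    obtain c where c: "vec n vs = c \<cdot>\<^sub>v one"
      using fixed_vecs_collinear_if_one_simple[OF Ac _ simple _ one_nz A_one, of "vec n vs"]
        cp evs \<open>\<rho> = 1\<close> unfolding A_def one_def by (auto simp: o_def)
    have "vs r = c" if "r < n" for r
      using arg_cong[OF c, of "\<lambda>v. v $ r"] that unfolding one_def by simp
    then show ?thesis using vs0 r0 n2 by simp
  qed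
qed

lemma mix_contraction_real:
  fixes W :: "real mat" and v :: "nat \<Rightarrow> real"
  assumes DS: "doubly_stochastic n W" and lamd: "second_singular_value W lam" and lam1: "lam < 1"
    and v0: "(\<Sum>i<n. v i) = 0"
  shows "(\<Sum>i<n. (mix n W v i)^2) \<le> lam^2 * (\<Sum>i<n. (v i)^2)"
proof (cases "(\<Sum>i<n. (v i)^2) = 0")
  case True
  then have "\<forall>i<n. v i = 0" using sum_sq_eq_0_imp_zero[where x=v] by blast
  then show ?thesis by (simp add: mix_real)
next
  case False
  obtain vs :: "nat \<Rightarrow> real" where vs0: "(\<Sum>i<n. vs i) = 0" and vsN: "(\<Sum>i<n. (vs i)^2) = 1"
    and max: "\<And>x. (\<Sum>i<n. x i) = 0 \<Longrightarrow>
      (\<Sum>i<n. (mix n W x i)^2) \<le> (\<Sum>i<n. (mix n W vs i)^2) * (\<Sum>i<n. (x i)^2)"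
    using rayleigh_maximizer_exists[OF v0 False] by blast
  have "\<exists>r0<n. vs r0 \<noteq> 0"
  proof (rule ccontr)
    assume "\<not> (\<exists>r0<n. vs r0 \<noteq> 0)"
    then have "(\<Sum>i<n. (vs i)^2) = 0" by auto
    then show False using vsN by simp
  qed
  then obtain r0 where r0: "r0 < n" "vs r0 \<noteq> 0" by blast
  have "(\<Sum>i<n. (mix n W vs i)^2) \<le> lam^2"
    using gram_eigenvalue_le_second_singular_value[OF DS lamd lam1
        rayleigh_maximizer_eigenvector[OF DS vs0 vsN max] vs0 r0] .
  then have "(\<Sum>i<n. (mix n W vs i)^2) * (\<Sum>i<n. (v i)^2) \<le> lam^2 * (\<Sum>i<n. (v i)^2)"
    by (intro mult_right_mono) (simp_all add: sum_nonneg)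
  then show ?thesis using max[OF v0] by linarith
qed

lemma power2_norm_eq_sum_Basis: "(norm (x::'a::euclidean_space))^2 = (\<Sum>b\<in>Basis. (x \<bullet> b)^2)"
proof -
  have "(norm x)^2 = x \<bullet> x" by (simp add: power2_norm_eq_inner)
  also have "\<dots> = (\<Sum>b\<in>Basis. (x \<bullet> b) * (x \<bullet> b))" by (rule euclidean_inner)
  finally show ?thesis by (simp add: power2_eq_square)
qed

lemma mix_inner: "mix n W v i \<bullet> b = mix n W (\<lambda>r. v r \<bullet> b) i"
  by (simp add: mix_def mix_real inner_sum_left)

lemma mix_contraction:
  fixes W :: "real mat" and v :: "nat \<Rightarrow> 'a::euclidean_space"
  assumes DS: "doubly_stochastic n W" and lamd: "second_singular_value W lam" and lam1: "lam < 1"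
    and v0: "(\<Sum>i<n. v i) = 0"
  shows "sqnorm n (mix n W v) \<le> lam^2 * sqnorm n v"
proof -
  have "(\<Sum>i<n. (norm (mix n W v i))^2) = (\<Sum>b\<in>Basis. \<Sum>i<n. (mix n W (\<lambda>r. v r \<bullet> b) i)^2)"
    unfolding power2_norm_eq_sum_Basis mix_inner by (rule sum.swap)
  also have "\<dots> \<le> (\<Sum>b\<in>(Basis::'a set). lam^2 * (\<Sum>i<n. (v i \<bullet> b)^2))"
  proof (rule sum_mono)
    fix b :: 'a
    have "(\<Sum>i<n. v i \<bullet> b) = 0" using v0 by (simp add: inner_sum_left[symmetric])
    then show "(\<Sum>i<n. (mix n W (\<lambda>r. v r \<bullet> b) i)^2) \<le> lam^2 * (\<Sum>i<n. (v i \<bullet> b)^2)"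
      by (rule mix_contraction_real[OF DS lamd lam1])
  qed
  also have "\<dots> = lam^2 * (\<Sum>i<n. (norm (v i))^2)"
    unfolding power2_norm_eq_sum_Basis sum_distrib_left[symmetric] by (subst sum.swap) simp
  finally show ?thesis unfolding sqnorm_def .
qed

lemma second_singular_value_sq_le_one:
  "second_singular_value W lam \<Longrightarrow> lam < 1 \<Longrightarrow> lam^2 \<le> 1"
  using second_singular_value_nonneg by (simp add: power_le_one)

lemma cons_err_mix_le:
  fixes v :: "nat \<Rightarrow> 'a::euclidean_space"
  assumes DS: "doubly_stochastic n W" and lamd: "second_singular_value W lam" and lam1: "lam < 1"
    and n: "n > 0"
  shows "cons_err n (mix n W v) \<le> lam^2 * cons_err n v"
proof -
  have "cons_err n (mix n W v) = sqnorm n (mix n W (centered n v))"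
    unfolding cons_err_eq_sqnorm_centered by (intro sqnorm_cong centered_mix DS)
  also have "\<dots> \<le> lam^2 * sqnorm n (centered n v)" by (intro mix_contraction[OF DS lamd lam1] sum_centered n)
  finally show ?thesis by (simp add: cons_err_eq_sqnorm_centered)
qed

lemma sqnorm_mix_minus_id_centered_le:
  fixes v :: "nat \<Rightarrow> 'a::euclidean_space"
  assumes DS: "doubly_stochastic n W" and lamd: "second_singular_value W lam" and lam1: "lam < 1"
    and n: "n > 0"
  shows "sqnorm n (\<lambda>i. mix n W (centered n v) i - centered n v i) \<le> 4 * cons_err n v"
proof -
  have "sqnorm n (mix n W (centered n v)) \<le> lam^2 * sqnorm n (centered n v)"
    by (rule mix_contraction[OF DS lamd lam1 sum_centered[OF n]])
  also have "\<dots> \<le> sqnorm n (centered n v)"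
    using second_singular_value_sq_le_one[OF lamd lam1] sqnorm_nonneg[of n "centered n v"]
    by (simp add: mult_left_le_one_le)
  finally show ?thesis
    using sqnorm_diff_le[of n "mix n W (centered n v)" "centered n v"] unfolding cons_err_eq_sqnorm_centered
    by linarith
qed

section \<open>Conditioning a product of finite distributions on one coordinate\<close>

lemma expectation_finite_pmf:
  fixes f :: "'a \<Rightarrow> real"
  assumes "finite (set_pmf M)"
  shows "measure_pmf.expectation M f = (\<Sum>a\<in>set_pmf M. pmf M a * f a)"
  by (subst integral_measure_pmf[OF assms]) auto

lemma expectation_pair_pmf_swap:
  fixes F :: "'a \<times> 'b \<Rightarrow> real"
  assumes p: "finite (set_pmf p)" and q: "finite (set_pmf q)"
  shows "measure_pmf.expectation (pair_pmf p q) F = measure_pmf.expectation q (\<lambda>b. measure_pmf.expectation p (\<lambda>a. F (a,b)))"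
proof -
  have fs: "finite (set_pmf (pair_pmf p q))" using p q by (simp add: set_pair_pmf)
  have "measure_pmf.expectation (pair_pmf p q) F = (\<Sum>x\<in>set_pmf p \<times> set_pmf q. pmf (pair_pmf p q) x * F x)"
    using expectation_finite_pmf[OF fs] by (simp add: set_pair_pmf)
  also have "\<dots> = (\<Sum>x\<in>set_pmf p \<times> set_pmf q. case x of (a,b) \<Rightarrow> pmf p a * pmf q b * F (a,b))"
    by (intro sum.cong refl) (auto simp: pmf_pair)
  also have "\<dots> = (\<Sum>a\<in>set_pmf p. \<Sum>b\<in>set_pmf q. pmf p a * pmf q b * F (a,b))"
    by (simp add: sum.cartesian_product)
  also have "\<dots> = (\<Sum>b\<in>set_pmf q. \<Sum>a\<in>set_pmf p. pmf p a * pmf q b * F (a,b))"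
    by (rule sum.swap)
  also have "\<dots> = (\<Sum>b\<in>set_pmf q. pmf q b * (\<Sum>a\<in>set_pmf p. pmf p a * F (a,b)))"
    by (simp add: sum_distrib_left mult.commute mult.left_commute)
  also have "\<dots> = measure_pmf.expectation q (\<lambda>b. measure_pmf.expectation p (\<lambda>a. F (a,b)))"
    using expectation_finite_pmf[OF q] expectation_finite_pmf[OF p] by simp
  finally show ?thesis .
qed

lemma finite_set_Pi_pmf:
  assumes "finite A" "\<And>x. x \<in> A \<Longrightarrow> finite (set_pmf (p x))"
  shows "finite (set_pmf (Pi_pmf A dflt p))"
  using assms by (simp add: set_Pi_pmf finite_PiE_dflt)

lemma expectation_Pi_pmf_split:
  fixes F :: "('i \<Rightarrow> 'a) \<Rightarrow> real"
  assumes I: "finite I" and j: "j \<in> I" and fp: "\<And>i. i \<in> I \<Longrightarrow> finite (set_pmf (p i))"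
  shows "measure_pmf.expectation (Pi_pmf I d p) F =
         measure_pmf.expectation (Pi_pmf (I - {j}) d p) (\<lambda>f. measure_pmf.expectation (p j) (\<lambda>y. F (f(j := y))))"
proof -
  have Ieq: "I = insert j (I - {j})" using j by auto
  have "Pi_pmf I d p = map_pmf (\<lambda>(y,f). f(j:=y)) (pair_pmf (p j) (Pi_pmf (I - {j}) d p))"
    by (subst Ieq, rule Pi_pmf_insert) (use I in auto)
  then have "measure_pmf.expectation (Pi_pmf I d p) F =
      measure_pmf.expectation (pair_pmf (p j) (Pi_pmf (I - {j}) d p)) (\<lambda>x. F ((snd x)(j := fst x)))"
    by (simp add: case_prod_beta)
  also have "\<dots> = measure_pmf.expectation (Pi_pmf (I - {j}) d p) (\<lambda>f. measure_pmf.expectation (p j) (\<lambda>y. F (f(j := y))))"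
    using expectation_pair_pmf_swap[OF fp[OF j] finite_set_Pi_pmf[of "I-{j}" p d], of "\<lambda>x. F ((snd x)(j := fst x))"] I fp
    by auto
  finally show ?thesis .
qed

lemma expectation_Pi_pmf_indep:
  fixes H :: "('i \<Rightarrow> 'a) \<Rightarrow> real"
  assumes I: "finite I" and j: "j \<in> I" and fp: "\<And>i. i \<in> I \<Longrightarrow> finite (set_pmf (p i))"
    and inv: "\<And>f y. H (f(j := y)) = H f"
  shows "measure_pmf.expectation (Pi_pmf I d p) H = measure_pmf.expectation (Pi_pmf (I - {j}) d p) H"
proof -
  have "measure_pmf.expectation (Pi_pmf I d p) H =
         measure_pmf.expectation (Pi_pmf (I - {j}) d p) (\<lambda>f. measure_pmf.expectation (p j) (\<lambda>y. H (f(j := y))))"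
    by (rule expectation_Pi_pmf_split[OF I j fp])
  also have "\<dots> = measure_pmf.expectation (Pi_pmf (I - {j}) d p) H"
    unfolding inv by simp
  finally show ?thesis .
qed

lemma expectation_Pi_pmf_mono_cond:
  fixes F H :: "('i \<Rightarrow> 'a) \<Rightarrow> real"
  assumes I: "finite I" and j: "j \<in> I" and fp: "\<And>i. i \<in> I \<Longrightarrow> finite (set_pmf (p i))"
    and inv: "\<And>f y. H (f(j := y)) = H f"
    and le: "\<And>f. measure_pmf.expectation (p j) (\<lambda>y. F (f(j := y))) \<le> H f"
  shows "measure_pmf.expectation (Pi_pmf I d p) F \<le> measure_pmf.expectation (Pi_pmf I d p) H"
proof -
  have fin: "finite (set_pmf (Pi_pmf (I - {j}) d p))" using I fp by (intro finite_set_Pi_pmf) auto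
  have "measure_pmf.expectation (Pi_pmf I d p) F =
         measure_pmf.expectation (Pi_pmf (I - {j}) d p) (\<lambda>f. measure_pmf.expectation (p j) (\<lambda>y. F (f(j := y))))"
    by (rule expectation_Pi_pmf_split[OF I j fp])
  also have "\<dots> \<le> measure_pmf.expectation (Pi_pmf (I - {j}) d p) H"
    by (intro integral_mono integrable_measure_pmf_finite fin le)
  also have "\<dots> = measure_pmf.expectation (Pi_pmf I d p) H"
    by (rule expectation_Pi_pmf_indep[OF I j fp inv, symmetric])
  finally show ?thesis .
qed

lemma expectation_Pi_pmf_zero_cond:
  fixes F :: "('i \<Rightarrow> 'a) \<Rightarrow> real"
  assumes I: "finite I" and j: "j \<in> I" and fp: "\<And>i. i \<in> I \<Longrightarrow> finite (set_pmf (p i))"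
    and z: "\<And>f. measure_pmf.expectation (p j) (\<lambda>y. F (f(j := y))) = 0"
  shows "measure_pmf.expectation (Pi_pmf I d p) F = 0"
  using expectation_Pi_pmf_split[OF I j fp, where d=d and F=F] z by simp

lemma finite_set_uniform_square_pmf:
  fixes m :: nat
  assumes "m > 0"
  shows "finite (set_pmf (pmf_of_set ({0..<m} \<times> {0..<m})))"
proof -
  have "{0..<m} \<times> {0..<m} \<noteq> {}" using assms by auto
  then show ?thesis by simp
qed

lemma expectation_uniform_square_fst:
  fixes F :: "nat \<Rightarrow> real" and m :: nat
  assumes m: "m > 0"
  shows "measure_pmf.expectation (pmf_of_set ({0..<m} \<times> {0..<m})) (\<lambda>y. F (fst y)) = (1 / real m) * (\<Sum>a<m. F a)"
proof -
  have "measure_pmf.expectation (pmf_of_set ({0..<m} \<times> {0..<m})) (\<lambda>y. F (fst y))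
      = (\<Sum>y\<in>{0..<m} \<times> {0..<m}. F (fst y)) / real (card ({0..<m} \<times> {0..<m}))"
    using m by (intro integral_pmf_of_set) auto
  also have "(\<Sum>y\<in>{0..<m} \<times> {0..<m}. F (fst y)) = real m * (\<Sum>a<m. F a)"
  proof -
    have "(\<Sum>y\<in>{0..<m} \<times> {0..<m}. F (fst y)) = (\<Sum>(a,b)\<in>{0..<m} \<times> {0..<m}. F a)"
      by (simp add: case_prod_beta)
    also have "\<dots> = (\<Sum>a\<in>{0..<m}. \<Sum>b\<in>{0..<m}. F a)" by (rule sum.cartesian_product[symmetric])
    also have "\<dots> = real m * (\<Sum>a<m. F a)" by (simp add: atLeast0LessThan sum_distrib_left)
    finally show ?thesis .
  qed
  finally show ?thesis using m by (simp add: card_cartesian_product)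
qed

section \<open>The GT-SAGA iterates\<close>

locale gt_saga_iterates =
  fixes n m :: nat and W :: "real mat" and \<alpha> :: real and G :: "nat \<Rightarrow> nat \<Rightarrow> 'a::euclidean_space \<Rightarrow> 'a"
    and x0 :: 'a
begin

definition "grad i v = (1 / real m) *\<^sub>R (\<Sum>j<m. G i j v)"

definition "x_it \<omega> k = gx n m W \<alpha> G x0 \<omega> k"
definition "y_it \<omega> k = gy n m W \<alpha> G x0 \<omega> k"
definition "z_it \<omega> k = gz n m W \<alpha> G x0 \<omega> k"

text \<open>\<open>g_prev \<omega> k\<close> is the stored \<open>g^(k-1)\<close>, \<open>g_it \<omega> k\<close> the SAGA estimator \<open>g^k\<close> built from the
  draws \<open>\<omega> (k, i) = (\<tau>_i^k, s_i^k)\<close>, and \<open>noise\<close> its error \<open>g^k - \<nabla>f(x^k)\<close>.\<close>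
definition "g_prev \<omega> k = fst (snd (snd (gt_saga n m W \<alpha> G x0 \<omega> k)))"
definition "g_it \<omega> k i = G i (fst (\<omega> (k,i))) (x_it \<omega> k i) - G i (fst (\<omega> (k,i))) (z_it \<omega> k i (fst (\<omega> (k,i))))
  + (1 / real m) *\<^sub>R (\<Sum>j<m. G i j (z_it \<omega> k i j))"

definition "noise \<omega> t i = g_it \<omega> t i - grad i (x_it \<omega> t i)"

lemma state_eq: "gt_saga n m W \<alpha> G x0 \<omega> k = (x_it \<omega> k, y_it \<omega> k, g_prev \<omega> k, z_it \<omega> k)"
  by (simp add: x_it_def y_it_def z_it_def g_prev_def gx_def gy_def gz_def)

lemma iterates_0:
  "x_it \<omega> 0 = (\<lambda>_. x0)" "y_it \<omega> 0 = (\<lambda>_. 0)" "g_prev \<omega> 0 = (\<lambda>_. 0)" "z_it \<omega> 0 = (\<lambda>_ _. x0)"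
  by (simp_all add: x_it_def y_it_def z_it_def g_prev_def gx_def gy_def gz_def)

lemma iterates_Suc:
  "g_prev \<omega> (Suc k) = g_it \<omega> k"
  "y_it \<omega> (Suc k) = mix n W (\<lambda>r. y_it \<omega> k r + g_it \<omega> k r - g_prev \<omega> k r)"
  "x_it \<omega> (Suc k) = mix n W (\<lambda>r. x_it \<omega> k r - \<alpha> *\<^sub>R y_it \<omega> (Suc k) r)"
  "z_it \<omega> (Suc k) = (\<lambda>i j. if j = snd (\<omega> (k,i)) then x_it \<omega> k i else z_it \<omega> k i j)"
proof -
  have e: "gt_saga n m W \<alpha> G x0 \<omega> (Suc k) =
    (mix n W (\<lambda>r. x_it \<omega> k r - \<alpha> *\<^sub>R mix n W (\<lambda>r. y_it \<omega> k r + g_it \<omega> k r - g_prev \<omega> k r) r),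
     mix n W (\<lambda>r. y_it \<omega> k r + g_it \<omega> k r - g_prev \<omega> k r), g_it \<omega> k,
     (\<lambda>i j. if j = snd (\<omega> (k,i)) then x_it \<omega> k i else z_it \<omega> k i j))"
    unfolding gt_saga.simps(2) state_eq by (simp add: Let_def mix_def g_it_def fun_eq_iff)
  then show "g_prev \<omega> (Suc k) = g_it \<omega> k"
    and "y_it \<omega> (Suc k) = mix n W (\<lambda>r. y_it \<omega> k r + g_it \<omega> k r - g_prev \<omega> k r)"
    and "x_it \<omega> (Suc k) = mix n W (\<lambda>r. x_it \<omega> k r - \<alpha> *\<^sub>R y_it \<omega> (Suc k) r)"
    and "z_it \<omega> (Suc k) = (\<lambda>i j. if j = snd (\<omega> (k,i)) then x_it \<omega> k i else z_it \<omega> k i j)"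
    by (simp_all add: g_prev_def x_it_def y_it_def z_it_def gx_def gy_def gz_def)
qed

lemma state_depends_on_past:
  "(\<And>s i. s < k \<Longrightarrow> \<omega> (s,i) = \<omega>' (s,i)) \<Longrightarrow> gt_saga n m W \<alpha> G x0 \<omega> k = gt_saga n m W \<alpha> G x0 \<omega>' k"
proof (induction k)
  case 0 then show ?case by simp
next
  case (Suc k)
  have "gt_saga n m W \<alpha> G x0 \<omega> k = gt_saga n m W \<alpha> G x0 \<omega>' k" using Suc by auto
  moreover have "\<omega> (k,i) = \<omega>' (k,i)" for i using Suc.prems by auto
  ultimately show ?case by (simp add: Let_def fun_eq_iff)
qed

lemma iterates_depend_on_past:
  assumes "\<And>s i. s < k \<Longrightarrow> \<omega> (s,i) = \<omega>' (s,i)"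
  shows "x_it \<omega> k = x_it \<omega>' k" "y_it \<omega> k = y_it \<omega>' k" "z_it \<omega> k = z_it \<omega>' k" "g_prev \<omega> k = g_prev \<omega>' k"
proof -
  have "gt_saga n m W \<alpha> G x0 \<omega> k = gt_saga n m W \<alpha> G x0 \<omega>' k" by (rule state_depends_on_past) (rule assms)
  then show "x_it \<omega> k = x_it \<omega>' k" "y_it \<omega> k = y_it \<omega>' k" "z_it \<omega> k = z_it \<omega>' k" "g_prev \<omega> k = g_prev \<omega>' k"
    by (simp_all add: state_eq)
qed

lemma grad_lipschitz:
  assumes smooth: "\<And>j x y. j < m \<Longrightarrow> norm (G i j x - G i j y) \<le> L * norm (x - y)" and m: "m > 0"
  shows "norm (grad i a - grad i b) \<le> L * norm (a - b)"
proof -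
  have "grad i a - grad i b = (1 / real m) *\<^sub>R (\<Sum>j<m. G i j a - G i j b)"
    by (simp add: grad_def sum_subtractf scaleR_diff_right)
  then have "norm (grad i a - grad i b) = (1 / real m) * norm (\<Sum>j<m. G i j a - G i j b)" by simp
  also have "\<dots> \<le> (1 / real m) * (\<Sum>j<m. L * norm (a - b))"
    by (intro mult_left_mono order_trans[OF norm_sum] sum_mono smooth) auto
  also have "\<dots> = L * norm (a - b)" using m by simp
  finally show ?thesis .
qed

lemma finite_set_draws: "m > 0 \<Longrightarrow> finite (set_pmf (draws n m N))"
  unfolding draws_def by (intro finite_set_Pi_pmf finite_set_uniform_square_pmf) auto

lemma integrable_draws: "m > 0 \<Longrightarrow> integrable (measure_pmf (draws n m N)) (f :: _ \<Rightarrow> real)"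
  by (rule integrable_measure_pmf_finite[OF finite_set_draws])

lemma noise_update_draw:
  "noise (f((t,i) := y)) t i = centered m (\<lambda>a. G i a (x_it f t i) - G i a (z_it f t i a)) (fst y)"
proof -
  have "x_it (f((t,i) := y)) t = x_it f t" "z_it (f((t,i) := y)) t = z_it f t"
    by (rule iterates_depend_on_past; simp)+
  then show ?thesis
    by (simp add: noise_def g_it_def centered_def avg_def grad_def sum_subtractf scaleR_diff_right algebra_simps)
qed

lemma noise_mean_zero_given_past:
  assumes past: "\<And>\<omega> \<omega>'. (\<And>s i. s < t \<Longrightarrow> \<omega> (s,i) = \<omega>' (s,i)) \<Longrightarrow> h \<omega> = h \<omega>'"
    and t: "t < N" and i: "i < n" and m: "m > 0"
  shows "measure_pmf.expectation (draws n m N) (\<lambda>\<omega>. h \<omega> \<bullet> noise \<omega> t i) = 0"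
  unfolding draws_def
proof (rule expectation_Pi_pmf_zero_cond[where j = "(t,i)"])
  show "finite ({0..<N} \<times> {0..<n})" "(t,i) \<in> {0..<N} \<times> {0..<n}" using t i by simp_all
  show "finite (set_pmf (pmf_of_set ({0..<m} \<times> {0..<m})))" for x
    using finite_set_uniform_square_pmf[OF m] .
  fix f :: "nat \<times> nat \<Rightarrow> nat \<times> nat"
  define \<psi> where "\<psi> = (\<lambda>a. G i a (x_it f t i) - G i a (z_it f t i a))"
  have "h (f((t,i) := y)) = h f" for y by (rule past) simp
  then have "measure_pmf.expectation (pmf_of_set ({0..<m} \<times> {0..<m})) (\<lambda>y. h (f((t,i) := y)) \<bullet> noise (f((t,i) := y)) t i)
      = (1 / real m) * (h f \<bullet> (\<Sum>a<m. centered m \<psi> a))"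
    unfolding noise_update_draw \<psi>_def[symmetric]
    using expectation_uniform_square_fst[OF m, of "\<lambda>a. h f \<bullet> centered m \<psi> a"] by (simp add: inner_sum_right)
  also have "\<dots> = 0" using m by (simp add: sum_centered)
  finally show "measure_pmf.expectation (pmf_of_set ({0..<m} \<times> {0..<m}))
      (\<lambda>y. h (f((t,i) := y)) \<bullet> noise (f((t,i) := y)) t i) = 0" .
qed

lemma noise_second_moment_le:
  assumes smooth: "\<And>j x y. j < m \<Longrightarrow> norm (G i j x - G i j y) \<le> L * norm (x - y)"
    and t: "t < N" and i: "i < n" and m: "m > 0" and L: "L \<ge> 0"
  shows "measure_pmf.expectation (draws n m N) (\<lambda>\<omega>. (norm (noise \<omega> t i))^2)
    \<le> measure_pmf.expectation (draws n m N) (\<lambda>\<omega>. L^2 * ((1 / real m) * (\<Sum>j<m. (norm (x_it \<omega> t i - z_it \<omega> t i j))^2)))"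
  unfolding draws_def
proof (rule expectation_Pi_pmf_mono_cond[where j = "(t,i)"])
  show "finite ({0..<N} \<times> {0..<n})" "(t,i) \<in> {0..<N} \<times> {0..<n}" using t i by simp_all
  show "finite (set_pmf (pmf_of_set ({0..<m} \<times> {0..<m})))" for x
    using finite_set_uniform_square_pmf[OF m] .
  fix f :: "nat \<times> nat \<Rightarrow> nat \<times> nat" and y
  have "x_it (f((t,i) := y)) t = x_it f t" "z_it (f((t,i) := y)) t = z_it f t"
    by (rule iterates_depend_on_past; simp)+
  then show "L^2 * ((1 / real m) * (\<Sum>j<m. (norm (x_it (f((t,i) := y)) t i - z_it (f((t,i) := y)) t i j))^2))
      = L^2 * ((1 / real m) * (\<Sum>j<m. (norm (x_it f t i - z_it f t i j))^2))"
    by simp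
next
  fix f :: "nat \<times> nat \<Rightarrow> nat \<times> nat"
  define X where "X = x_it f t i"
  define Z where "Z = z_it f t i"
  define \<psi> where "\<psi> = (\<lambda>a. G i a X - G i a (Z a))"
  have "sqnorm m (centered m \<psi>) \<le> sqnorm m \<psi>" using sqnorm_centered_le m by blast
  also have "\<dots> \<le> (\<Sum>a<m. L^2 * (norm (X - Z a))^2)"
    unfolding sqnorm_def \<psi>_def
    using smooth L by (intro sum_mono) (simp add: power_mult_distrib[symmetric] power_mono)
  finally have "sqnorm m (centered m \<psi>) \<le> L^2 * (\<Sum>a<m. (norm (X - Z a))^2)"
    by (simp add: sum_distrib_left)
  then show "measure_pmf.expectation (pmf_of_set ({0..<m} \<times> {0..<m})) (\<lambda>y. (norm (noise (f((t,i) := y)) t i))^2)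
      \<le> L^2 * ((1 / real m) * (\<Sum>j<m. (norm (x_it f t i - z_it f t i j))^2))"
    unfolding noise_update_draw X_def[symmetric] Z_def[symmetric] \<psi>_def[symmetric]
      expectation_uniform_square_fst[OF m, of "\<lambda>a. (norm (centered m \<psi> a))^2"]
    using m by (simp add: sqnorm_def field_simps)
qed

end

section \<open>Pathwise inequalities\<close>

context gt_saga_iterates
begin

definition "grads \<omega> t = (\<lambda>i. grad i (x_it \<omega> t i))"
definition "x_step \<omega> k i = x_it \<omega> (Suc k) i - x_it \<omega> k i"
definition "saga_gap \<omega> t = (\<Sum>i<n. (1/real m) * (\<Sum>j<m. (norm (x_it \<omega> t i - z_it \<omega> t i j))^2))"
definition "saga_gap_avg \<omega> t = (\<Sum>i<n. (1/real m) * (\<Sum>j<m. (norm (avg n (x_it \<omega> t) - z_it \<omega> t i j))^2))"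

text \<open>tracker_dev \<omega> k is (I - J)(y^(k+1) + \<nabla>f(x^(k+1)) - g^k); mixed_base \<omega> k is the part of
  (I - J) y^(k+1) fixed before the draws of step k.\<close>
definition "tracker_dev \<omega> k =
  centered n (\<lambda>i. y_it \<omega> (Suc k) i + grad i (x_it \<omega> (Suc k) i) - g_it \<omega> k i)"
definition "mixed_base \<omega> k = mix n W (centered n (\<lambda>r. y_it \<omega> k r - g_prev \<omega> k r + grad r (x_it \<omega> k r)))"

lemma avg_y_it_eq_avg_g_prev:
  assumes DS: "doubly_stochastic n W"
  shows "avg n (y_it \<omega> k) = avg n (g_prev \<omega> k)"
proof (induction k)
  case 0 then show ?case by (simp add: iterates_0 avg_def)
next
  case (Suc k)
  have "avg n (y_it \<omega> (Suc k)) = avg n (\<lambda>r. y_it \<omega> k r + g_it \<omega> k r - g_prev \<omega> k r)"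
    unfolding iterates_Suc(2) by (rule avg_mix[OF DS])
  also have "\<dots> = avg n (g_it \<omega> k)" using Suc by (simp add: avg_add_diff)
  finally show ?case by (simp add: iterates_Suc(1))
qed

lemma cons_err_y_it_SucSuc_le:
  assumes DS: "doubly_stochastic n W" and lamd: "second_singular_value W lam" and lam1: "lam < 1"
    and n: "n > 0"
  shows "cons_err n (y_it \<omega> (Suc (Suc k))) \<le> lam^2 * (sqnorm n (tracker_dev \<omega> k)
      + 2 * sinner n (tracker_dev \<omega> k) (noise \<omega> (Suc k)) + sqnorm n (noise \<omega> (Suc k)))"
proof -
  let ?v = "\<lambda>r. y_it \<omega> (Suc k) r + g_it \<omega> (Suc k) r - g_prev \<omega> (Suc k) r"
  let ?e = "noise \<omega> (Suc k)"
  have "cons_err n (y_it \<omega> (Suc (Suc k))) \<le> lam^2 * cons_err n ?v"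
    unfolding iterates_Suc(2) by (rule cons_err_mix_le[OF DS lamd lam1 n])
  also have "cons_err n ?v = sqnorm n (\<lambda>i. tracker_dev \<omega> k i + centered n ?e i)"
    unfolding cons_err_eq_sqnorm_centered
  proof (rule sqnorm_cong)
    fix i
    have "?v = (\<lambda>r. (y_it \<omega> (Suc k) r + grad r (x_it \<omega> (Suc k) r) - g_it \<omega> k r) + ?e r)"
      by (simp add: iterates_Suc(1) noise_def fun_eq_iff algebra_simps)
    then show "centered n ?v i = tracker_dev \<omega> k i + centered n ?e i"
      by (simp add: centered_add tracker_dev_def)
  qed
  also have "\<dots> = sqnorm n (tracker_dev \<omega> k) + 2 * sinner n (tracker_dev \<omega> k) ?e + sqnorm n (centered n ?e)"
    unfolding sqnorm_add sinner_centered[OF sum_centered[OF n]] tracker_dev_def ..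
  also have "\<dots> \<le> sqnorm n (tracker_dev \<omega> k) + 2 * sinner n (tracker_dev \<omega> k) ?e + sqnorm n ?e"
    using sqnorm_centered_le[OF n] by simp
  finally show ?thesis using lam1 by (simp add: mult_left_mono)
qed

lemma centered_y_it_Suc:
  assumes DS: "doubly_stochastic n W" and i: "i < n"
  shows "centered n (y_it \<omega> (Suc k)) i = mixed_base \<omega> k i + mix n W (centered n (noise \<omega> k)) i"
proof -
  let ?A = "\<lambda>r. y_it \<omega> k r - g_prev \<omega> k r + grad r (x_it \<omega> k r)"
  have "(\<lambda>r. y_it \<omega> k r + g_it \<omega> k r - g_prev \<omega> k r) = (\<lambda>r. ?A r + noise \<omega> k r)"
    by (simp add: noise_def fun_eq_iff algebra_simps)
  moreover have "centered n (\<lambda>r. ?A r + noise \<omega> k r) = (\<lambda>r. centered n ?A r + centered n (noise \<omega> k) r)"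
    by (rule ext) (rule centered_add)
  ultimately show ?thesis
    unfolding iterates_Suc(2) centered_mix[OF DS i] mixed_base_def by (simp only: mix_add)
qed

lemma tracker_dev_decomp:
  assumes DS: "doubly_stochastic n W" and i: "i < n"
  shows "tracker_dev \<omega> k i = mixed_base \<omega> k i
      + (mix n W (centered n (noise \<omega> k)) i - centered n (noise \<omega> k) i)
      + centered n (\<lambda>i. grad i (x_it \<omega> (Suc k) i) - grad i (x_it \<omega> k i)) i"
proof -
  have "g_it \<omega> k = (\<lambda>r. grad r (x_it \<omega> k r) + noise \<omega> k r)" by (simp add: noise_def fun_eq_iff)
  then have "tracker_dev \<omega> k i = centered n (y_it \<omega> (Suc k)) i + centered n (\<lambda>i. grad i (x_it \<omega> (Suc k) i)) i
      - (centered n (\<lambda>r. grad r (x_it \<omega> k r)) i + centered n (noise \<omega> k) i)"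
    unfolding tracker_dev_def by (simp add: centered_add centered_diff)
  then show ?thesis unfolding centered_y_it_Suc[OF DS i] by (simp add: centered_diff algebra_simps)
qed

lemma sqnorm_centered_grad_step_le:
  assumes n: "n > 0" and m: "m > 0" and L: "L \<ge> 0"
    and smooth: "\<And>i j x y. i < n \<Longrightarrow> j < m \<Longrightarrow> norm (G i j x - G i j y) \<le> L * norm (x - y)"
  shows "sqnorm n (centered n (\<lambda>i. grad i (x_it \<omega> (Suc k) i) - grad i (x_it \<omega> k i)))
      \<le> L^2 * sqnorm n (x_step \<omega> k)"
proof -
  have "(norm (grad i (x_it \<omega> (Suc k) i) - grad i (x_it \<omega> k i)))^2 \<le> L^2 * (norm (x_step \<omega> k i))^2"
    if "i < n" for i
  proof -
    have "norm (grad i (x_it \<omega> (Suc k) i) - grad i (x_it \<omega> k i)) \<le> L * norm (x_step \<omega> k i)"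
      unfolding x_step_def using that by (intro grad_lipschitz[OF _ m] smooth)
    then show ?thesis by (simp add: power_mult_distrib[symmetric] power_mono)
  qed
  then have "sqnorm n (\<lambda>i. grad i (x_it \<omega> (Suc k) i) - grad i (x_it \<omega> k i)) \<le> L^2 * sqnorm n (x_step \<omega> k)"
    unfolding sqnorm_def sum_distrib_left by (intro sum_mono) simp
  then show ?thesis using sqnorm_centered_le[OF n] order_trans by blast
qed

text \<open>Expand cons_err (y^(k+1)) = \<parallel>mixed_base + W (I - J) e^k\<parallel>^2 and apply Young's inequality with
  weight \<eta>; the cross term with e^k is kept because it vanishes in expectation.\<close>
lemma sqnorm_tracker_dev_le:
  assumes DS: "doubly_stochastic n W" and lamd: "second_singular_value W lam" and lam1: "lam < 1"
    and n: "n > 0" and m: "m > 0" and eta: "\<eta> > 0" and L: "L \<ge> 0"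
    and smooth: "\<And>i j x y. i < n \<Longrightarrow> j < m \<Longrightarrow> norm (G i j x - G i j y) \<le> L * norm (x - y)"
  shows "sqnorm n (tracker_dev \<omega> k)
      \<le> (1 + \<eta>) * (cons_err n (y_it \<omega> (Suc k)) - 2 * sinner n (centered n (mixed_base \<omega> k)) (noise \<omega> k)
            + 4 * sqnorm n (noise \<omega> k)) + (1 + 1/\<eta>) * (L^2 * sqnorm n (x_step \<omega> k))"
proof -
  define e where "e = noise \<omega> k"
  define c where "c = mixed_base \<omega> k"
  define B where "B = (\<lambda>i. mix n W (centered n e) i - centered n e i)"
  define d where "d = centered n (\<lambda>i. grad i (x_it \<omega> (Suc k) i) - grad i (x_it \<omega> k i))"
  have "sqnorm n (tracker_dev \<omega> k) = sqnorm n (\<lambda>i. (c i + B i) + d i)"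
    using tracker_dev_decomp[OF DS] by (intro sqnorm_cong) (simp add: c_def B_def d_def e_def)
  also have "\<dots> \<le> (1 + \<eta>) * sqnorm n (\<lambda>i. c i + B i) + (1 + 1/\<eta>) * sqnorm n d"
    by (rule sqnorm_add_le[OF eta])
  also have "sqnorm n (\<lambda>i. c i + B i) \<le> cons_err n (y_it \<omega> (Suc k)) - 2 * sinner n (centered n c) e + 4 * sqnorm n e"
  proof -
    have "cons_err n (y_it \<omega> (Suc k)) = sqnorm n (\<lambda>i. c i + mix n W (centered n e) i)"
      unfolding cons_err_eq_sqnorm_centered using centered_y_it_Suc[OF DS]
      by (intro sqnorm_cong) (simp add: c_def e_def)
    moreover have "sinner n c B = sinner n c (mix n W (centered n e)) - sinner n (centered n c) e"
      unfolding B_def sinner_diff_right sinner_centered_swap[OF n] ..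
    moreover have "sqnorm n B \<le> 4 * sqnorm n e"
      using sqnorm_mix_minus_id_centered_le[OF DS lamd lam1 n, of e] sqnorm_centered_le[OF n, of e]
      unfolding B_def cons_err_eq_sqnorm_centered by linarith
    ultimately show ?thesis
      using sqnorm_add[of n c B] sqnorm_add[of n c "mix n W (centered n e)"]
        sqnorm_nonneg[of n "mix n W (centered n e)"] by linarith
  qed
  also have "sqnorm n d \<le> L^2 * sqnorm n (x_step \<omega> k)"
    unfolding d_def by (rule sqnorm_centered_grad_step_le[OF n m L smooth])
  finally show ?thesis using eta unfolding e_def c_def by (simp add: mult_left_mono)
qed

lemma sqnorm_mix_y_it_Suc_le:
  assumes DS: "doubly_stochastic n W" and lamd: "second_singular_value W lam" and lam1: "lam < 1"
    and n: "n > 0"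
  shows "sqnorm n (mix n W (y_it \<omega> (Suc k))) \<le> lam^2 * cons_err n (y_it \<omega> (Suc k))
      + real n * (norm (avg n (grads \<omega> k)))^2 + 2 * sinner n (\<lambda>_. avg n (grads \<omega> k)) (noise \<omega> k)
      + sqnorm n (noise \<omega> k)"
proof -
  define y where "y = y_it \<omega> (Suc k)"
  define e where "e = noise \<omega> k"
  define a where "a = avg n (grads \<omega> k)"
  have avg_y: "avg n (mix n W y) = a + avg n e"
  proof -
    have "avg n (mix n W y) = avg n (g_it \<omega> k)"
      unfolding y_def avg_mix[OF DS] avg_y_it_eq_avg_g_prev[OF DS] iterates_Suc(1) ..
    also have "g_it \<omega> k = (\<lambda>i. grads \<omega> k i + e i)" by (simp add: e_def noise_def grads_def fun_eq_iff)
    finally show ?thesis by (simp add: a_def avg_def sum.distrib scaleR_add_right)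
  qed
  have "sinner n (\<lambda>_. a) e = real n * (a \<bullet> avg n e)"
    by (simp add: sinner_def inner_sum_right[symmetric] sum_eq_card_scaleR_avg[OF n])
  then have "real n * (norm (a + avg n e))^2
      = real n * (norm a)^2 + 2 * sinner n (\<lambda>_. a) e + real n * (norm (avg n e))^2"
    by (simp add: power2_norm_eq_inner inner_add_left inner_add_right inner_commute algebra_simps)
  moreover have "sqnorm n (mix n W y) = cons_err n (mix n W y) + real n * (norm (a + avg n e))^2"
    unfolding cons_err_eq_sqnorm_centered avg_y[symmetric] by (rule sqnorm_decomp[OF n])
  moreover have "cons_err n (mix n W y) \<le> lam^2 * cons_err n y" by (rule cons_err_mix_le[OF DS lamd lam1 n])
  moreover have "real n * (norm (avg n e))^2 \<le> sqnorm n e"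
    using sqnorm_decomp[OF n, of e] sqnorm_nonneg[of n "centered n e"] by linarith
  ultimately have "sqnorm n (mix n W y) \<le> lam^2 * cons_err n y + real n * (norm a)^2 + 2 * sinner n (\<lambda>_. a) e
      + sqnorm n e"
    by linarith
  then show ?thesis unfolding y_def e_def a_def .
qed

text \<open>x^(k+1) - x^k = (W - I)(I - J) x^k - \<alpha> W y^(k+1), split by Young's inequality with weight 1/2.\<close>
lemma sqnorm_x_step_le:
  assumes DS: "doubly_stochastic n W" and lamd: "second_singular_value W lam" and lam1: "lam < 1"
    and n: "n > 0"
  shows "sqnorm n (x_step \<omega> k) \<le> 6 * cons_err n (x_it \<omega> k) + 3 * \<alpha>^2 * (lam^2 * cons_err n (y_it \<omega> (Suc k))
      + real n * (norm (avg n (grads \<omega> k)))^2 + 2 * sinner n (\<lambda>_. avg n (grads \<omega> k)) (noise \<omega> k)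
      + sqnorm n (noise \<omega> k))"
proof -
  define x where "x = x_it \<omega> k"
  define u where "u = (\<lambda>i. mix n W (centered n x) i - centered n x i)"
  define v where "v = (\<lambda>i. (- \<alpha>) *\<^sub>R mix n W (y_it \<omega> (Suc k)) i)"
  have "x_step \<omega> k i = u i + v i" if i: "i < n" for i
  proof -
    have "mix n W x i = mix n W (centered n x) i + avg n x"
      using centered_mix[OF DS i, of x] by (simp add: centered_def avg_mix[OF DS] algebra_simps)
    then show ?thesis
      unfolding x_step_def iterates_Suc(3) mix_diff mix_scaleR u_def v_def x_def[symmetric]
      by (simp add: centered_def algebra_simps)
  qed
  then have "sqnorm n (x_step \<omega> k) = sqnorm n (\<lambda>i. u i + v i)" by (intro sqnorm_cong) auto
  also have "\<dots> \<le> (1 + 1/2) * sqnorm n u + (1 + 1/(1/2)) * sqnorm n v"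
    by (rule sqnorm_add_le) simp
  finally have "sqnorm n (x_step \<omega> k) \<le> (3/2) * sqnorm n u + 3 * (\<alpha>^2 * sqnorm n (mix n W (y_it \<omega> (Suc k))))"
    unfolding v_def sqnorm_scaleR by simp
  moreover have "sqnorm n u \<le> 4 * cons_err n x"
    unfolding u_def by (rule sqnorm_mix_minus_id_centered_le[OF DS lamd lam1 n])
  moreover have "\<alpha>^2 * sqnorm n (mix n W (y_it \<omega> (Suc k))) \<le> \<alpha>^2 * (lam^2 * cons_err n (y_it \<omega> (Suc k))
      + real n * (norm (avg n (grads \<omega> k)))^2 + 2 * sinner n (\<lambda>_. avg n (grads \<omega> k)) (noise \<omega> k)
      + sqnorm n (noise \<omega> k))"
    by (intro mult_left_mono sqnorm_mix_y_it_Suc_le[OF DS lamd lam1 n]) simp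
  ultimately show ?thesis unfolding x_def by linarith
qed

lemma saga_gap_Suc_le:
  assumes m: "m > 0"
  shows "saga_gap \<omega> (Suc k) \<le> 2 * sqnorm n (x_step \<omega> k) + 2 * saga_gap \<omega> k"
proof -
  have "saga_gap \<omega> (Suc k) \<le> (\<Sum>i<n. (1/real m) * (\<Sum>j<m. 2 * (norm (x_step \<omega> k i))^2
      + 2 * (norm (x_it \<omega> k i - z_it \<omega> k i j))^2))"
    unfolding saga_gap_def
  proof (intro sum_mono mult_left_mono)
    fix i j
    show "(norm (x_it \<omega> (Suc k) i - z_it \<omega> (Suc k) i j))^2
      \<le> 2 * (norm (x_step \<omega> k i))^2 + 2 * (norm (x_it \<omega> k i - z_it \<omega> k i j))^2"
    proof (cases "j = snd (\<omega> (k,i))")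
      case True
      then show ?thesis by (simp add: iterates_Suc(4) x_step_def)
    next
      case False
      then show ?thesis using norm_diff_sq_le[of "x_it \<omega> (Suc k) i" "z_it \<omega> k i j" "x_it \<omega> k i"]
        by (simp add: iterates_Suc(4) x_step_def)
    qed
  qed simp
  also have "\<dots> = 2 * sqnorm n (x_step \<omega> k) + 2 * saga_gap \<omega> k"
    using m by (simp add: saga_gap_def sqnorm_def sum.distrib sum_distrib_left distrib_left)
  finally show ?thesis .
qed

lemma saga_gap_le:
  assumes m: "m > 0"
  shows "saga_gap \<omega> k \<le> 2 * cons_err n (x_it \<omega> k) + 2 * saga_gap_avg \<omega> k"
proof -
  have "saga_gap \<omega> k \<le> (\<Sum>i<n. (1/real m) * (\<Sum>j<m. 2 * (norm (x_it \<omega> k i - avg n (x_it \<omega> k)))^2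
        + 2 * (norm (avg n (x_it \<omega> k) - z_it \<omega> k i j))^2))"
    unfolding saga_gap_def by (intro sum_mono mult_left_mono norm_diff_sq_le) simp
  also have "\<dots> = 2 * cons_err n (x_it \<omega> k) + 2 * saga_gap_avg \<omega> k"
    using m by (simp add: saga_gap_avg_def cons_err_def sum.distrib sum_distrib_left distrib_left)
  finally show ?thesis .
qed

end

section \<open>Arithmetic of the recursion\<close>

text \<open>Young's weight \<eta> = (1 - q)/(3q) for q = \<lambda>^2 makes q(1 + \<eta>) = (1 + 2q)/3 and turns the
  coefficient of the gradient change into 3q/(1 - q).\<close>
lemma tracking_recursion_young:
  fixes q \<eta> K LHS EU En1 a En ENd S0 S1 :: real
  assumes q: "0 < q" "q < 1" and K: "K \<ge> 0" and eta: "\<eta> = (1 - q) / (3 * q)"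
    and h1: "LHS \<le> q * (EU + En1)"
    and h2: "EU \<le> (1 + \<eta>) * (a + 4 * En) + (1 + 1/\<eta>) * (K * ENd)"
    and h4: "En1 \<le> K * S1" and h5: "S1 \<le> 2 * ENd + 2 * S0"
  shows "LHS \<le> (1 + 2*q)/3 * a + 4 * ((1 + 2*q)/3 * En) + 3 * q / (1 - q) * (K * ENd) + 2 * q * (K * S0)"
proof -
  have e1: "q * (1 + \<eta>) = (1 + 2*q)/3" unfolding eta using q by (simp add: field_simps)
  have e2: "q * (1 + 1/\<eta>) + 2 * q = 3 * q / (1 - q)" unfolding eta using q by (simp add: field_simps)
  have "q * EU \<le> q * ((1 + \<eta>) * (a + 4 * En) + (1 + 1/\<eta>) * (K * ENd))"
    using h2 q by (intro mult_left_mono) auto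
  moreover have "q * En1 \<le> q * (K * (2 * ENd + 2 * S0))"
    using h4 h5 q K by (intro mult_left_mono order_trans[OF h4]) auto
  ultimately have "LHS \<le> (q * (1 + \<eta>)) * a + 4 * ((q * (1 + \<eta>)) * En)
      + (q * (1 + 1/\<eta>) + 2 * q) * (K * ENd) + 2 * q * (K * S0)"
    using h1 by (simp add: algebra_simps)
  then show ?thesis unfolding e1 e2 .
qed

text \<open>A2 stands for \<alpha>^2; the step-size restriction makes \<kappa> = 9qA2L^2/(1 - q) at most 9(1 - q)/256.\<close>
lemma tracking_recursion_arith:
  fixes q L A2 a Xe Te D En ENd S0 LHS :: real
  assumes q: "0 < q" "q < 1" and L: "L > 0" and A2: "A2 \<ge> 0" and al: "A2 * L^2 * q \<le> (1-q)^2/256"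
    and nn: "a \<ge> 0" "Xe \<ge> 0" "Te \<ge> 0" "D \<ge> 0" "En \<ge> 0" "ENd \<ge> 0" "S0 \<ge> 0"
    and comb: "LHS \<le> (1 + 2*q)/3 * a + 4 * ((1 + 2*q)/3 * En) + 3 * q / (1 - q) * (L^2 * ENd)
      + 2 * q * (L^2 * S0)"
    and h3: "ENd \<le> 6 * Xe + 3 * A2 * (q * a + D + En)"
    and h6: "En \<le> L^2 * S0" and h7: "S0 \<le> 2 * Xe + 2 * Te"
  shows "LHS \<le> (1 + q) / 2 * a + 30.5 * L^2 / (1 - q) * Xe + 97 / 8 * L^2 * Te
                + 16 * q * A2 * L^2 / (1 - q) * D"
proof -
  have q1: "1 - q > 0" using q by simp
  define c1 where "c1 = (1 + 2*q)/3"
  define c3 where "c3 = 3 * q / (1 - q)"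
  define P where "P = L^2 * ENd"
  define S where "S = L^2 * S0"
  define X where "X = L^2 * Xe"
  define T where "T = L^2 * Te"
  define Z where "Z = 1 / (1 - q) * X"
  define \<kappa> where "\<kappa> = 3 * c3 * A2 * L^2"
  have f: "LHS \<le> c1 * a + 4 * (c1 * En) + c3 * P + 2 * (q * S)"
    using comb unfolding c1_def c3_def P_def S_def by (simp add: algebra_simps)
  have c3nn: "c3 \<ge> 0" unfolding c3_def using q q1 by simp
  have f5: "c3 * P \<le> 6 * (c3 * X) + \<kappa> * (q * a) + \<kappa> * D + \<kappa> * En"
  proof -
    have "c3 * P \<le> c3 * (L^2 * (6 * Xe + 3 * A2 * (q * a + D + En)))"
      unfolding P_def using h3 c3nn by (intro mult_left_mono) auto
    also have "\<dots> = 6 * (c3 * X) + \<kappa> * (q * a) + \<kappa> * D + \<kappa> * En"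
      unfolding \<kappa>_def X_def by (simp add: algebra_simps)
    finally show ?thesis .
  qed
  have kap0: "\<kappa> \<ge> 0" unfolding \<kappa>_def using c3nn A2 by simp
  have kap: "\<kappa> \<le> 9 * (1 - q) / 256"
  proof -
    have "\<kappa> = 9 / (1 - q) * (A2 * L^2 * q)" unfolding \<kappa>_def c3_def by (simp add: field_simps)
    also have "\<dots> \<le> 9 / (1 - q) * ((1-q)^2/256)" using al q1 by (intro mult_left_mono) auto
    also have "\<dots> = 9 * (1 - q) / 256" using q1 by (simp add: field_simps power2_eq_square)
    finally show ?thesis .
  qed
  have g1: "\<kappa> * (q * a) \<le> (1 + q) / 2 * a - c1 * a"
  proof -
    have "\<kappa> * q \<le> \<kappa>" using kap0 q by (simp add: mult_left_le)
    also have "\<dots> \<le> (1 + q) / 2 - c1"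
    proof -
      have E: "(1 + q) / 2 - c1 = (1 - q) / 6" unfolding c1_def by (simp add: field_simps)
      have "9 * (1 - q) / 256 \<le> (1 - q) / 6" using q by simp
      with kap have "\<kappa> \<le> (1 - q) / 6" by (rule order_trans)
      then show ?thesis unfolding E .
    qed
    finally have "\<kappa> * q \<le> (1 + q) / 2 - c1" .
    then have "(\<kappa> * q) * a \<le> ((1 + q) / 2 - c1) * a" using nn(1) by (intro mult_right_mono) auto
    then show ?thesis by (simp add: algebra_simps)
  qed
  have g2: "\<kappa> * En \<le> 9 / 256 * En"
  proof -
    have "\<kappa> \<le> 9 / 256" using kap q by simp
    then show ?thesis using nn(5) by (intro mult_right_mono) auto
  qed
  have g3: "c1 * En \<le> En"
  proof -
    have "c1 \<le> 1" unfolding c1_def using q by simp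
    then show ?thesis using nn(5) by (intro mult_left_le_one_le) (auto simp: c1_def q(1) less_imp_le)
  qed
  have g4: "En \<le> S" using h6 unfolding S_def .
  have Snn: "S \<ge> 0" unfolding S_def using nn(7) by simp
  have g5: "q * S \<le> S" using q Snn by (simp add: mult_left_le_one_le)
  have g6: "S \<le> 2 * X + 2 * T"
  proof -
    have "S \<le> L^2 * (2 * Xe + 2 * Te)" unfolding S_def using h7 by (intro mult_left_mono) auto
    then show ?thesis unfolding X_def T_def by (simp add: algebra_simps)
  qed
  have Xnn: "X \<ge> 0" unfolding X_def using nn(2) by simp
  have Tnn: "T \<ge> 0" unfolding T_def using nn(3) by simp
  have g7: "c3 * X \<le> 3 * Z"
  proof -
    have "c3 \<le> 3 / (1 - q)" unfolding c3_def using q q1 by (simp add: divide_right_mono)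
    then have "c3 * X \<le> 3 / (1 - q) * X" using Xnn by (intro mult_right_mono) auto
    then show ?thesis unfolding Z_def by simp
  qed
  have g8: "X \<le> Z"
  proof -
    have "1 \<le> 1 / (1 - q)" using q q1 by (simp add: field_simps)
    then have "1 * X \<le> 1 / (1 - q) * X" using Xnn by (intro mult_right_mono) auto
    then show ?thesis unfolding Z_def by simp
  qed
  have g9: "\<kappa> * D \<le> 16 * q * A2 * L^2 / (1 - q) * D"
  proof -
    have "\<kappa> = 9 * q * A2 * L^2 / (1 - q)" unfolding \<kappa>_def c3_def by (simp add: field_simps)
    also have "\<dots> \<le> 16 * q * A2 * L^2 / (1 - q)" using q q1 A2 by (intro divide_right_mono) auto
    finally show ?thesis using nn(4) by (intro mult_right_mono) auto
  qed
  have z: "30.5 * L^2 / (1 - q) * Xe = 30.5 * Z" unfolding Z_def X_def by simp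
  have t: "97 / 8 * L^2 * Te = 97/8 * T" unfolding T_def by simp
  show ?thesis unfolding z t
    using f f5 g1 g2 g3 g4 g5 g6 g7 g8 g9 Xnn Tnn Snn nn(5) by linarith
qed

lemma step_size_condition:
  fixes lam L \<alpha> :: real
  assumes lam: "lam > 0" and L: "L > 0" and \<alpha>: "\<alpha> > 0"
    and step: "\<alpha> \<le> (1 - lam^2) / (16 * lam) * (1 / L)"
  shows "lam < 1" and "\<alpha>^2 * L^2 * lam^2 \<le> (1 - lam^2)^2 / 256"
proof -
  have "\<alpha> * (16 * lam * L) \<le> (1 - lam^2) / (16 * lam) * (1 / L) * (16 * lam * L)"
    using step lam L by (intro mult_right_mono) auto
  also have "\<dots> = 1 - lam^2" using lam L by (simp add: field_simps)
  finally have bound: "\<alpha> * L * lam \<le> (1 - lam^2) / 16" by (simp add: field_simps)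
  moreover have "0 < \<alpha> * L * lam" using \<alpha> L lam by simp
  ultimately have "0 < (1 - lam^2) / 16" by linarith
  then have "lam^2 < 1" by simp
  then show "lam < 1" using lam by (simp add: power_less_one_iff abs_square_less_1)
  from bound have "(\<alpha> * L * lam)^2 \<le> ((1 - lam^2) / 16)^2"
    using \<alpha> L lam by (intro power_mono) auto
  then show "\<alpha>^2 * L^2 * lam^2 \<le> (1 - lam^2)^2 / 256" by (simp add: power_mult_distrib power_divide)
qed

section \<open>Taking expectations\<close>

context gt_saga_iterates
begin

abbreviation expect :: "nat \<Rightarrow> ((nat \<times> nat \<Rightarrow> nat \<times> nat) \<Rightarrow> real) \<Rightarrow> real" where
  "expect N f \<equiv> measure_pmf.expectation (draws n m N) f"

lemma expect_add: "m > 0 \<Longrightarrow> expect N (\<lambda>\<omega>. f \<omega> + g \<omega>) = expect N f + expect N g"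
  and expect_diff: "m > 0 \<Longrightarrow> expect N (\<lambda>\<omega>. f \<omega> - g \<omega>) = expect N f - expect N g"
  and expect_sum: "m > 0 \<Longrightarrow> expect N (\<lambda>\<omega>. \<Sum>i\<in>A. h i \<omega>) = (\<Sum>i\<in>A. expect N (h i))"
  by (simp_all add: integrable_draws Bochner_Integration.integral_add Bochner_Integration.integral_diff
      Bochner_Integration.integral_sum)

lemma expect_cmult: "expect N (\<lambda>\<omega>. c * f \<omega>) = c * expect N f"
  by (rule integral_mult_right_zero)

lemma expect_mono: "m > 0 \<Longrightarrow> (\<And>\<omega>. f \<omega> \<le> g \<omega>) \<Longrightarrow> expect N f \<le> expect N g"
  by (intro integral_mono integrable_draws) auto

lemma expect_nonneg: "(\<And>\<omega>. f \<omega> \<ge> 0) \<Longrightarrow> expect N f \<ge> 0"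
  by (intro integral_nonneg_AE) auto

lemma expectation_sinner_noise_zero:
  assumes past: "\<And>i \<omega> \<omega>'. (\<And>s i'. s < t \<Longrightarrow> \<omega> (s,i') = \<omega>' (s,i')) \<Longrightarrow> h \<omega> i = h \<omega>' i"
    and t: "t < N" and m: "m > 0"
  shows "expect N (\<lambda>\<omega>. sinner n (h \<omega>) (noise \<omega> t)) = 0"
  unfolding sinner_def expect_sum[OF m]
  using noise_mean_zero_given_past[where h="\<lambda>\<omega>. h \<omega> i" for i, OF past t _ m] by simp

lemma expectation_sqnorm_noise_le:
  assumes smooth: "\<And>i j x y. i < n \<Longrightarrow> j < m \<Longrightarrow> norm (G i j x - G i j y) \<le> L * norm (x - y)"
    and t: "t < N" and m: "m > 0" and L: "L \<ge> 0"
  shows "expect N (\<lambda>\<omega>. sqnorm n (noise \<omega> t)) \<le> L^2 * expect N (\<lambda>\<omega>. saga_gap \<omega> t)"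
proof -
  have "expect N (\<lambda>\<omega>. sqnorm n (noise \<omega> t)) = (\<Sum>i<n. expect N (\<lambda>\<omega>. (norm (noise \<omega> t i))^2))"
    unfolding sqnorm_def by (rule expect_sum[OF m])
  also have "\<dots> \<le> (\<Sum>i<n. expect N (\<lambda>\<omega>. L^2 * ((1 / real m) * (\<Sum>j<m. (norm (x_it \<omega> t i - z_it \<omega> t i j))^2))))"
    by (intro sum_mono noise_second_moment_le[OF _ t _ m L] smooth) auto
  also have "\<dots> = L^2 * expect N (\<lambda>\<omega>. saga_gap \<omega> t)"
    unfolding saga_gap_def expect_cmult expect_sum[OF m] by (simp add: sum_distrib_left)
  finally show ?thesis .
qed

text \<open>Each partner of a noise term is determined by the draws before the step of that noise.\<close>
lemma expected_cross_terms_zero: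
  assumes m: "m > 0"
  shows "expect (Suc (Suc k)) (\<lambda>\<omega>. sinner n (tracker_dev \<omega> k) (noise \<omega> (Suc k))) = 0"
    and "expect (Suc (Suc k)) (\<lambda>\<omega>. sinner n (centered n (mixed_base \<omega> k)) (noise \<omega> k)) = 0"
    and "expect (Suc (Suc k)) (\<lambda>\<omega>. sinner n (\<lambda>_. avg n (grads \<omega> k)) (noise \<omega> k)) = 0"
proof -
  have same_past: "x_it \<omega> t = x_it \<omega>' t" "y_it \<omega> t = y_it \<omega>' t" "g_prev \<omega> t = g_prev \<omega>' t"
    if h: "\<And>s i'. s < t \<Longrightarrow> \<omega> (s,i') = \<omega>' (s,i')" for \<omega> \<omega>' :: "nat \<times> nat \<Rightarrow> nat \<times> nat" and t
    by (rule iterates_depend_on_past, rule h, assumption)+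
  show "expect (Suc (Suc k)) (\<lambda>\<omega>. sinner n (tracker_dev \<omega> k) (noise \<omega> (Suc k))) = 0"
  proof (rule expectation_sinner_noise_zero[OF _ _ m])
    fix i and \<omega> \<omega>' :: "nat \<times> nat \<Rightarrow> nat \<times> nat"
    assume "\<And>s i'. s < Suc k \<Longrightarrow> \<omega> (s,i') = \<omega>' (s,i')"
    note same = same_past[where t="Suc k" and \<omega>=\<omega> and \<omega>'=\<omega>', OF this]
    show "tracker_dev \<omega> k i = tracker_dev \<omega>' k i"
      using same unfolding tracker_dev_def iterates_Suc(1)[symmetric] by simp
  qed simp
  show "expect (Suc (Suc k)) (\<lambda>\<omega>. sinner n (centered n (mixed_base \<omega> k)) (noise \<omega> k)) = 0"
  proof (rule expectation_sinner_noise_zero[OF _ _ m])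
    fix i and \<omega> \<omega>' :: "nat \<times> nat \<Rightarrow> nat \<times> nat"
    assume "\<And>s i'. s < k \<Longrightarrow> \<omega> (s,i') = \<omega>' (s,i')"
    note same = same_past[where t=k and \<omega>=\<omega> and \<omega>'=\<omega>', OF this]
    show "centered n (mixed_base \<omega> k) i = centered n (mixed_base \<omega>' k) i"
      using same unfolding mixed_base_def by simp
  qed simp
  show "expect (Suc (Suc k)) (\<lambda>\<omega>. sinner n (\<lambda>_. avg n (grads \<omega> k)) (noise \<omega> k)) = 0"
  proof (rule expectation_sinner_noise_zero[OF _ _ m])
    fix i and \<omega> \<omega>' :: "nat \<times> nat \<Rightarrow> nat \<times> nat"
    assume "\<And>s i'. s < k \<Longrightarrow> \<omega> (s,i') = \<omega>' (s,i')"
    note same = same_past[where t=k and \<omega>=\<omega> and \<omega>'=\<omega>', OF this]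
    show "avg n (grads \<omega> k) = avg n (grads \<omega>' k)"
      using same unfolding grads_def by simp
  qed simp
qed

lemma expected_cons_err_y_it_bound_pos:
  fixes k :: nat
  assumes DS: "doubly_stochastic n W" and lamd: "second_singular_value W lam" and lam1: "lam < 1"
    and lampos: "lam > 0" and n: "n > 0" and m: "m > 0" and L: "L > 0"
    and smooth: "\<And>i j x y. i < n \<Longrightarrow> j < m \<Longrightarrow> norm (G i j x - G i j y) \<le> L * norm (x - y)"
    and step: "\<alpha>^2 * L^2 * lam^2 \<le> (1 - lam^2)^2 / 256"
  defines "E \<equiv> expect (Suc (Suc k))"
  shows "E (\<lambda>\<omega>. cons_err n (y_it \<omega> (Suc (Suc k))))
     \<le> (1 + lam^2) / 2 * E (\<lambda>\<omega>. cons_err n (y_it \<omega> (Suc k)))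
       + 30.5 * L^2 / (1 - lam^2) * E (\<lambda>\<omega>. cons_err n (x_it \<omega> k))
       + 97 / 8 * L^2 * E (\<lambda>\<omega>. saga_gap_avg \<omega> k)
       + 16 * lam^2 * \<alpha>^2 * L^2 / (1 - lam^2) * E (\<lambda>\<omega>. real n * (norm (avg n (grads \<omega> k)))^2)"
proof -
  define q where "q = lam^2"
  have q: "0 < q" "q < 1"
    using second_singular_value_nonneg[OF lamd] lam1 lampos unfolding q_def
    by (simp_all add: power_less_one_iff abs_square_less_1)
  define \<eta> where "\<eta> = (1 - q) / (3 * q)"
  have eta: "\<eta> > 0" unfolding \<eta>_def using q by simp
  note lin = expect_add[OF m] expect_diff[OF m] expect_cmult
  note cross = expected_cross_terms_zero[OF m, of k, folded E_def]
  have "E (\<lambda>\<omega>. cons_err n (y_it \<omega> (Suc (Suc k)))) \<le> E (\<lambda>\<omega>. q * (sqnorm n (tracker_dev \<omega> k)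
      + 2 * sinner n (tracker_dev \<omega> k) (noise \<omega> (Suc k)) + sqnorm n (noise \<omega> (Suc k))))"
    unfolding E_def q_def by (intro expect_mono[OF m] cons_err_y_it_SucSuc_le[OF DS lamd lam1 n])
  then have h1: "E (\<lambda>\<omega>. cons_err n (y_it \<omega> (Suc (Suc k))))
      \<le> q * (E (\<lambda>\<omega>. sqnorm n (tracker_dev \<omega> k)) + E (\<lambda>\<omega>. sqnorm n (noise \<omega> (Suc k))))"
    using cross(1) by (simp add: E_def lin)
  have "E (\<lambda>\<omega>. sqnorm n (tracker_dev \<omega> k)) \<le> E (\<lambda>\<omega>. (1 + \<eta>) * (cons_err n (y_it \<omega> (Suc k))
      - 2 * sinner n (centered n (mixed_base \<omega> k)) (noise \<omega> k) + 4 * sqnorm n (noise \<omega> k))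
      + (1 + 1/\<eta>) * (L^2 * sqnorm n (x_step \<omega> k)))"
    unfolding E_def using L by (intro expect_mono[OF m] sqnorm_tracker_dev_le[OF DS lamd lam1 n m eta _ smooth]) simp
  then have h2: "E (\<lambda>\<omega>. sqnorm n (tracker_dev \<omega> k)) \<le> (1 + \<eta>) * (E (\<lambda>\<omega>. cons_err n (y_it \<omega> (Suc k)))
      + 4 * E (\<lambda>\<omega>. sqnorm n (noise \<omega> k))) + (1 + 1/\<eta>) * (L^2 * E (\<lambda>\<omega>. sqnorm n (x_step \<omega> k)))"
    using cross(2) by (simp add: E_def lin)
  have "E (\<lambda>\<omega>. sqnorm n (x_step \<omega> k)) \<le> E (\<lambda>\<omega>. 6 * cons_err n (x_it \<omega> k) + 3 * \<alpha>^2 * (q * cons_err n (y_it \<omega> (Suc k))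
      + real n * (norm (avg n (grads \<omega> k)))^2 + 2 * sinner n (\<lambda>_. avg n (grads \<omega> k)) (noise \<omega> k)
      + sqnorm n (noise \<omega> k)))"
    unfolding E_def q_def by (intro expect_mono[OF m] sqnorm_x_step_le[OF DS lamd lam1 n])
  then have h3: "E (\<lambda>\<omega>. sqnorm n (x_step \<omega> k)) \<le> 6 * E (\<lambda>\<omega>. cons_err n (x_it \<omega> k))
      + 3 * \<alpha>^2 * (q * E (\<lambda>\<omega>. cons_err n (y_it \<omega> (Suc k)))
      + E (\<lambda>\<omega>. real n * (norm (avg n (grads \<omega> k)))^2) + E (\<lambda>\<omega>. sqnorm n (noise \<omega> k)))"
    using cross(3) by (simp add: E_def lin)
  have h4: "E (\<lambda>\<omega>. sqnorm n (noise \<omega> (Suc k))) \<le> L^2 * E (\<lambda>\<omega>. saga_gap \<omega> (Suc k))"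
    and h6: "E (\<lambda>\<omega>. sqnorm n (noise \<omega> k)) \<le> L^2 * E (\<lambda>\<omega>. saga_gap \<omega> k)"
    unfolding E_def using L by (auto intro!: expectation_sqnorm_noise_le[OF smooth _ m])
  have h5: "E (\<lambda>\<omega>. saga_gap \<omega> (Suc k)) \<le> 2 * E (\<lambda>\<omega>. sqnorm n (x_step \<omega> k)) + 2 * E (\<lambda>\<omega>. saga_gap \<omega> k)"
    using expect_mono[OF m saga_gap_Suc_le[OF m]] by (simp add: E_def lin)
  have h7: "E (\<lambda>\<omega>. saga_gap \<omega> k) \<le> 2 * E (\<lambda>\<omega>. cons_err n (x_it \<omega> k)) + 2 * E (\<lambda>\<omega>. saga_gap_avg \<omega> k)"
    using expect_mono[OF m saga_gap_le[OF m]] by (simp add: E_def lin)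
  have nn: "E (\<lambda>\<omega>. cons_err n (y_it \<omega> (Suc k))) \<ge> 0" "E (\<lambda>\<omega>. cons_err n (x_it \<omega> k)) \<ge> 0"
    "E (\<lambda>\<omega>. saga_gap_avg \<omega> k) \<ge> 0" "E (\<lambda>\<omega>. real n * (norm (avg n (grads \<omega> k)))^2) \<ge> 0"
    "E (\<lambda>\<omega>. sqnorm n (noise \<omega> k)) \<ge> 0" "E (\<lambda>\<omega>. sqnorm n (x_step \<omega> k)) \<ge> 0" "E (\<lambda>\<omega>. saga_gap \<omega> k) \<ge> 0"
    unfolding E_def
    by (intro expect_nonneg; simp add: cons_err_def saga_gap_avg_def saga_gap_def sqnorm_def sum_nonneg)+
  have "L^2 \<ge> 0" by simp
  note comb = tracking_recursion_young[OF q this \<eta>_def h1 h2 h4 h5]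
  show ?thesis
    using tracking_recursion_arith[OF q L _ step[folded q_def] nn comb h3 h6 h7]
    unfolding q_def by simp
qed

lemma expected_cons_err_y_it_bound:
  fixes k :: nat
  assumes DS: "doubly_stochastic n W" and lamd: "second_singular_value W lam"
    and n: "n > 0" and m: "m > 0" and L: "L > 0" and \<alpha>: "\<alpha> > 0"
    and smooth: "\<And>i j x y. i < n \<Longrightarrow> j < m \<Longrightarrow> norm (G i j x - G i j y) \<le> L * norm (x - y)"
    and step: "lam = 0 \<or> \<alpha> \<le> (1 - lam^2) / (16 * lam) * (1 / L)"
  defines "E \<equiv> expect (Suc (Suc k))"
  shows "E (\<lambda>\<omega>. cons_err n (y_it \<omega> (Suc (Suc k))))
     \<le> (1 + lam^2) / 2 * E (\<lambda>\<omega>. cons_err n (y_it \<omega> (Suc k)))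
       + 30.5 * L^2 / (1 - lam^2) * E (\<lambda>\<omega>. cons_err n (x_it \<omega> k))
       + 97 / 8 * L^2 * E (\<lambda>\<omega>. saga_gap_avg \<omega> k)
       + 16 * lam^2 * \<alpha>^2 * L^2 / (1 - lam^2) * E (\<lambda>\<omega>. real n * (norm (avg n (grads \<omega> k)))^2)"
proof (cases "lam = 0")
  case True
  have "cons_err n (y_it \<omega> (Suc (Suc k))) = 0" for \<omega>
    using cons_err_y_it_SucSuc_le[OF DS lamd _ n, of \<omega> k] True
      sum_nonneg[of "{..<n}" "\<lambda>i. (norm (y_it \<omega> (Suc (Suc k)) i - avg n (y_it \<omega> (Suc (Suc k)))))^2"]
    by (simp add: cons_err_def)
  then have "E (\<lambda>\<omega>. cons_err n (y_it \<omega> (Suc (Suc k)))) = 0" by (simp add: E_def)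
  moreover have "E (\<lambda>\<omega>. cons_err n (y_it \<omega> (Suc k))) \<ge> 0" "E (\<lambda>\<omega>. cons_err n (x_it \<omega> k)) \<ge> 0"
    "E (\<lambda>\<omega>. saga_gap_avg \<omega> k) \<ge> 0"
    unfolding E_def by (intro expect_nonneg; simp add: cons_err_def saga_gap_avg_def sum_nonneg)+
  ultimately show ?thesis using True by simp
next
  case False
  then have lam_pos: "lam > 0" using second_singular_value_nonneg[OF lamd] by simp
  have "\<alpha> \<le> (1 - lam^2) / (16 * lam) * (1 / L)" using step False by blast
  note step_size = step_size_condition[OF lam_pos L \<alpha> this]
  show ?thesis
    unfolding E_def
    by (rule expected_cons_err_y_it_bound_pos[OF DS lamd step_size(1) lam_pos n m L smooth step_size(2)])
qed

end

theorem lemma12: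
  fixes n m :: nat and f :: "nat \<Rightarrow> nat \<Rightarrow> 'a::euclidean_space \<Rightarrow> real"
    and G :: "nat \<Rightarrow> nat \<Rightarrow> 'a \<Rightarrow> 'a" and L \<alpha> lam :: real and W :: "real mat" and x0 :: 'a
    and k :: nat
  assumes n: "n \<ge> 1" and m: "m \<ge> 1"
    and grad: "\<And>i j x. i < n \<Longrightarrow> j < m \<Longrightarrow> (f i j has_derivative (\<lambda>h. G i j x \<bullet> h)) (at x)"
    and L: "L > 0"
    and smooth: "\<And>i j x y. i < n \<Longrightarrow> j < m \<Longrightarrow> norm (G i j x - G i j y) \<le> L * norm (x - y)"
    and Fbdd: "bdd_below (range (\<lambda>x. (1 / real n) * (\<Sum>i<n. (1 / real m) * (\<Sum>j<m. f i j x))))"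
    and W: "doubly_stochastic n W" "nonneg_mat W" "primitive_mat W"
    and lam: "second_singular_value W lam"
    and alpha_pos: "\<alpha> > 0"
    and alpha1: "lam = 0 \<or> \<alpha> \<le> (1 - lam^2) / (16 * lam) * (1 / L)"
    and alpha2: "\<alpha> \<le> sqrt (real n) / sqrt (8 * real m) * (1 / L)"
  shows
   "(let P = draws n m (k + 2);
         X = gx n m W \<alpha> G x0; Y = gy n m W \<alpha> G x0; Z = gz n m W \<alpha> G x0;
         E = measure_pmf.expectation P
     in E (\<lambda>\<omega>. cons_err n (Y \<omega> (k + 2)))
        \<le> (1 + lam^2) / 2 * E (\<lambda>\<omega>. cons_err n (Y \<omega> (k + 1)))
          + 30.5 * L^2 / (1 - lam^2) * E (\<lambda>\<omega>. cons_err n (X \<omega> k))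
          + 97 * L^2 * real n / 8 *
              E (\<lambda>\<omega>. (1 / real n) * (\<Sum>i<n. (1 / real m) *
                        (\<Sum>j<m. (norm (avg n (X \<omega> k) - Z \<omega> k i j))^2)))
          + 16 * lam^2 * \<alpha>^2 * L^2 * real n / (1 - lam^2) *
              E (\<lambda>\<omega>. (norm (avg n (\<lambda>i. (1 / real m) *\<^sub>R (\<Sum>j<m. G i j (X \<omega> k i)))))^2))"
proof -
  interpret gt_saga_iterates n m W \<alpha> G x0 .
  have n0: "n > 0" and m0: "m > 0" using n m by auto
  define E where "E = expect (Suc (Suc k))"
  note bound = expected_cons_err_y_it_bound[OF W(1) lam n0 m0 L alpha_pos smooth alpha1, of k, folded E_def]
  have saga_gap_avg_scaled: "E (\<lambda>\<omega>. (1 / real n) * (\<Sum>i<n. (1 / real m) * (\<Sum>j<m. (norm (avg n (x_it \<omega> k) - z_it \<omega> k i j))^2)))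
      = (1 / real n) * E (\<lambda>\<omega>. saga_gap_avg \<omega> k)"
    unfolding E_def saga_gap_avg_def by (rule expect_cmult)
  have grads_scaled: "E (\<lambda>\<omega>. real n * (norm (avg n (grads \<omega> k)))^2)
      = real n * E (\<lambda>\<omega>. (norm (avg n (\<lambda>i. (1 / real m) *\<^sub>R (\<Sum>j<m. G i j (x_it \<omega> k i)))))^2)"
    unfolding E_def grads_def grad_def by (rule expect_cmult)
  have "E (\<lambda>\<omega>. cons_err n (y_it \<omega> (Suc (Suc k))))
      \<le> (1 + lam^2) / 2 * E (\<lambda>\<omega>. cons_err n (y_it \<omega> (Suc k)))
        + 30.5 * L^2 / (1 - lam^2) * E (\<lambda>\<omega>. cons_err n (x_it \<omega> k))
        + 97 * L^2 * real n / 8 *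
            E (\<lambda>\<omega>. (1 / real n) * (\<Sum>i<n. (1 / real m) * (\<Sum>j<m. (norm (avg n (x_it \<omega> k) - z_it \<omega> k i j))^2)))
        + 16 * lam^2 * \<alpha>^2 * L^2 * real n / (1 - lam^2) *
            E (\<lambda>\<omega>. (norm (avg n (\<lambda>i. (1 / real m) *\<^sub>R (\<Sum>j<m. G i j (x_it \<omega> k i)))))^2)"
    using bound n0 unfolding saga_gap_avg_scaled grads_scaled by (simp add: field_simps)
  moreover have "gx n m W \<alpha> G x0 = x_it" "gy n m W \<alpha> G x0 = y_it" "gz n m W \<alpha> G x0 = z_it"
    and "k + 2 = Suc (Suc k)" "k + 1 = Suc k"
    by (simp_all add: fun_eq_iff x_it_def y_it_def z_it_def)
  ultimately show ?thesis unfolding Let_def E_def by simp_all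
qed

end
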